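(* Let $S$ be a Hermitian $m\times m$ matrix such that $f(\mathbf{E})=\mathbf{E}\cdot S\mathbf{E}$ is $Q^*$-convex. For nonzero $\mathbf{k}\in\mathbb{R}^d$ let $\mathcal{S}_{\mathbf{k}}=\{\mathbf{H}\in\mathcal{E}_{\mathbf{k}}: f(\mathbf{H})=0\}$ and $\mathcal{U}_{\mathbf{k}}=\{\mathbf{G}\in\mathbb{C}^\ell:\hat L(\mathbf{k})\mathbf{G}\in\mathcal{S}_{\mathbf{k}}\}$. Then: (i) for every nonzero $\mathbf{k}$ and every $\mathbf{G}\in\mathcal{U}_{\mathbf{k}}$, $S\hat L(\mathbf{k})\mathbf{G}\in\mathcal{J}_{\mathbf{k}}$; (ii) if $\Lambda$ is a lattice in $\mathbb{R}^d$ with reciprocal set $\Lambda^*=\{\mathbf{k}: e^{i\mathbf{k}\cdot\mathbf{x}}\text{ is }\Lambda\text{-periodic}\}$, $\underline{\mathbf{U}}^1(\mathbf{x})=\sum_{\mathbf{k}\in\Lambda^*\setminus\{0\}}\widehat{\underline{\mathbf{U}}^1}(\mathbf{k})e^{i\mathbf{k}\cdot\mathbf{x}}$ with $\widehat{\underline{\mathbf{U}}^1}(\mathbf{k})\in\mathcal{U}_{\mathbf{k}}$ for all such $\mathbf{k}$ and $\sum_{\mathbf{k}}|\hat L(\mathbf{k})\widehat{\underline{\mathbf{U}}^1}(\mathbf{k})|^2<\infty$, and $\underline{\mathbf{U}}^0$ is a polynomial of degree at most $t$ with $L\underline{\mathbf{U}}^0=\underline{\mathbf{E}}^0$ constant,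 then $\underline{\mathbf{E}}=L(\underline{\mathbf{U}}^0+\underline{\mathbf{U}}^1)$ satisfies $\langle f(\underline{\mathbf{E}})\rangle=f(\langle\underline{\mathbf{E}}\rangle)$, and every nonzero-frequency Fourier coefficient of $\underline{\mathbf{J}}=S\underline{\mathbf{E}}$ at $\mathbf{k}$ lies in $\mathcal{J}_{\mathbf{k}}$.
   Context: Fix integers $d,\ell,m,t\ge 1$ and complex constants $A_{rq}$, $A^{a_1\ldots a_h}_{rqh}$ ($1\le r\le m$, $1\le q\le \ell$, $1\le h\le t$, $1\le a_i\le d$). Let $L$ be the $m\times\ell$ matrix of differential operators $L_{rq}=A_{rq}+\sum_{h=1}^t\sum_{a_1,\ldots,a_h=1}^d A^{a_1\ldots a_h}_{rqh}\partial_{x_{a_1}}\cdots\partial_{x_{a_h}}$ acting on $\mathbb{C}^\ell$-valued potentials on $\mathbb{R}^d$. For $\mathbf{k}\in\mathbb{R}^d$, $\hat L(\mathbf{k})$ is the $m\times\ell$ matrix with entries $A_{rq}+\sum_{h}\sum_{a_1,\ldots,a_h} i^hA^{a_1\ldots a_h}_{rqh}k_{a_1}\cdots k_{a_h}$, $\hat L^\dagger(\mathbf{k})$ its conjugate transpose, $\mathcal{E}_{\mathbf{k}}$ the range of $\hat L(\mathbf{k})$ and $\mathcal{J}_{\mathbf{k}}$ the null space of $\hat L^\dagger(\mathbf{k})$. For $\mathbf{a},\mathbf{b}\in\mathbb{C}^m$, $\mathbf{a}\cdot\mathbf{b}=\sum_r\overline{a_r}b_r$. A $\mathbb{C}^\ell$-valued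 function $\mathbf{U}$ on $\mathbb{R}^d$ is an admissible potential if $\mathbf{U}=\mathbf{U}^0+\mathbf{U}^1$, where $\mathbf{U}^0$ is a polynomial of degree at most $t$ such that $L\mathbf{U}^0$ is constant, and $\mathbf{U}^1$ is periodic with respect to some lattice (any lattice allowed) with $L\mathbf{U}^1$ (distributional) square-integrable over a period cell; $\langle\cdot\rangle$ denotes the average over a period cell. $f$ is $Q^*$-convex if $\langle f(\mathbf{E})\rangle\ge f(\langle\mathbf{E}\rangle)$ for every $\mathbf{E}=L\mathbf{U}$ with $\mathbf{U}$ admissible. *)

theory Defs
  imports "HOL-Analysis.Analysis"
begin

text \<open>Index types: 'd (space dimension d), 'l (number of potential components),
 'm (number of field components).  The operator L is given by
 A0 r q = A_{rq} and Ah h as r q = A^{a_1...a_h}_{rqh} for as = [a_1,...,a_h].\<close>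

definition cdot :: "complex^'m \<Rightarrow> complex^'m \<Rightarrow> complex" where
  "cdot a b = (\<Sum>r\<in>UNIV. cnj (a$r) * b$r)"

definition hermitian :: "complex^'m^'m \<Rightarrow> bool" where
  "hermitian S \<longleftrightarrow> (\<forall>i j. S$i$j = cnj (S$j$i))"

definition conj_transpose :: "complex^'l^'m \<Rightarrow> complex^'m^'l" where
  "conj_transpose M = (\<chi> q r. cnj (M$r$q))"

text \<open>f(E) = E . S E (real since S is Hermitian; we take the real part).\<close>
definition quadform :: "complex^'m^'m \<Rightarrow> complex^'m \<Rightarrow> real" where
  "quadform S E = Re (cdot E (S *v E))"

definition Lhat :: "('m \<Rightarrow> 'l \<Rightarrow> complex) \<Rightarrow> (nat \<Rightarrow> 'd::finite list \<Rightarrow> 'm \<Rightarrow> 'l \<Rightarrow> complex)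
    \<Rightarrow> nat \<Rightarrow> real^'d \<Rightarrow> complex^'l^'m" where
  "Lhat A0 Ah t k = (\<chi> r q. A0 r q + (\<Sum>h\<in>{1..t}. \<Sum>as\<in>{as::'d list. length as = h}.
      \<i>^h * Ah h as r q * prod_list (map (\<lambda>a. complex_of_real (k$a)) as)))"

definition rangeE where
  "rangeE A0 Ah t k = range (\<lambda>G. Lhat A0 Ah t k *v G)"

definition nullJ where
  "nullJ A0 Ah t k = {H. conj_transpose (Lhat A0 Ah t k) *v H = 0}"

definition Sset where
  "Sset S A0 Ah t k = {H \<in> rangeE A0 Ah t k. quadform S H = 0}"

definition Uset where
  "Uset S A0 Ah t k = {G. Lhat A0 Ah t k *v G \<in> Sset S A0 Ah t k}"

definition partial_deriv :: "'d::finite \<Rightarrow> (real^'d \<Rightarrow> complex) \<Rightarrow> real^'d \<Rightarrow> complex" where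
  "partial_deriv a F x = vector_derivative (\<lambda>s::real. F (x + s *\<^sub>R axis a 1)) (at 0)"

fun dpart :: "'d::finite list \<Rightarrow> (real^'d \<Rightarrow> complex) \<Rightarrow> real^'d \<Rightarrow> complex" where
  "dpart [] F = F"
| "dpart (a # as) F = partial_deriv a (dpart as F)"

definition Lop :: "('m \<Rightarrow> 'l \<Rightarrow> complex) \<Rightarrow> (nat \<Rightarrow> 'd::finite list \<Rightarrow> 'm \<Rightarrow> 'l \<Rightarrow> complex)
    \<Rightarrow> nat \<Rightarrow> (real^'d \<Rightarrow> complex^'l) \<Rightarrow> real^'d \<Rightarrow> complex^'m" where
  "Lop A0 Ah t U x = (\<chi> r. \<Sum>q\<in>UNIV. A0 r q * (U x $ q) + (\<Sum>h\<in>{1..t}. \<Sum>as\<in>{as::'d list. length as = h}.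
      Ah h as r q * dpart as (\<lambda>y. U y $ q) x))"

definition multidx :: "nat \<Rightarrow> ('d::finite \<Rightarrow> nat) set" where
  "multidx t = {\<alpha>. sum \<alpha> UNIV \<le> t}"

definition poly_deg_le :: "nat \<Rightarrow> (real^'d::finite \<Rightarrow> complex^'l) \<Rightarrow> bool" where
  "poly_deg_le t U \<longleftrightarrow> (\<exists>p :: ('d \<Rightarrow> nat) \<Rightarrow> complex^'l. \<forall>x.
      U x = (\<Sum>\<alpha>\<in>multidx t. (\<Prod>j\<in>UNIV. complex_of_real (x$j) ^ \<alpha> j) *s p \<alpha>))"

definition lattice :: "real^'d^'d \<Rightarrow> (real^'d::finite) set" where
  "lattice B = range (\<lambda>n::int^'d. B *v (\<chi> i. real_of_int (n$i)))"

definition recip :: "real^'d^'d \<Rightarrow> (real^'d::finite) set" where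
  "recip B = {k. \<forall>lam\<in>lattice B. \<forall>x. exp (\<i> * complex_of_real (k \<bullet> (x + lam)))
                                     = exp (\<i> * complex_of_real (k \<bullet> x))}"

definition cell :: "real^'d^'d \<Rightarrow> (real^'d::finite) set" where
  "cell B = (\<lambda>y. B *v y) ` {y. \<forall>i. 0 \<le> y$i \<and> y$i \<le> 1}"

definition avg :: "real^'d^'d \<Rightarrow> (real^'d::finite \<Rightarrow> 'b::{banach,second_countable_topology}) \<Rightarrow> 'b" where
  "avg B g = (1 / \<bar>det B\<bar>) *\<^sub>R (LINT x:cell B|lborel. g x)"

definition fourier_coeff :: "real^'d^'d \<Rightarrow> (real^'d::finite \<Rightarrow> complex^'m) \<Rightarrow> real^'d \<Rightarrow> complex^'m" where
  "fourier_coeff B g k = avg B (\<lambda>x. exp (- (\<i> * complex_of_real (k \<bullet> x))) *s g x)"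

definition has_L2_fourier :: "real^'d^'d \<Rightarrow> (real^'d::finite \<Rightarrow> complex^'m) \<Rightarrow> (real^'d \<Rightarrow> complex^'m) \<Rightarrow> bool" where
  "has_L2_fourier B E a \<longleftrightarrow> E \<in> borel_measurable lborel
     \<and> set_integrable lborel (cell B) (\<lambda>x. (norm (E x))^2)
     \<and> ((\<lambda>F. LINT x:cell B|lborel.
             (norm (E x - (\<Sum>k\<in>F. exp (\<i> * complex_of_real (k \<bullet> x)) *s a k)))^2)
          \<longlongrightarrow> 0) (finite_subsets_at_top (recip B))"

text \<open>An admissible field is E = L U^0 + L U^1 with U^0 a polynomial of
  degree <= t with L U^0 = E0 constant, and U^1 a Lambda-periodic (tempered) distribution with
  Fourier coefficients c k (k in recip B), so that L U^1 has Fourier coefficients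
  Lhat k c k, required square summable (L U^1 in L^2 of the cell).\<close>
definition qstar_convex :: "('m::finite \<Rightarrow> 'l::finite \<Rightarrow> complex) \<Rightarrow> (nat \<Rightarrow> 'd::finite list \<Rightarrow> 'm \<Rightarrow> 'l \<Rightarrow> complex)
    \<Rightarrow> nat \<Rightarrow> (complex^'m \<Rightarrow> real) \<Rightarrow> bool" where
  "qstar_convex A0 Ah t f \<longleftrightarrow>
    (\<forall>(B::real^'d^'d) (U0::real^'d \<Rightarrow> complex^'l) E0 (c::real^'d \<Rightarrow> complex^'l) E.
       invertible B \<and> poly_deg_le t U0 \<and> (\<forall>x. Lop A0 Ah t U0 x = E0)
       \<and> (\<exists>C N. \<forall>k\<in>recip B. norm (c k) \<le> C * (1 + norm k) ^ N)
       \<and> (\<lambda>k. (norm (Lhat A0 Ah t k *v c k))^2) summable_on recip B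
       \<and> has_L2_fourier B (\<lambda>x. E x - E0) (\<lambda>k. Lhat A0 Ah t k *v c k)
       \<and> set_integrable lborel (cell B) (\<lambda>x. f (E x))
       \<longrightarrow> avg B (\<lambda>x. f (E x)) \<ge> f (avg B E))"

end

theory Submission
  imports Defs
begin

text \<open>Testing \<open>Q\<^sup>*\<close>-convexity on a single oscillation \<open>U\<^sup>1(x) = G exp(i k\<cdot>x)\<close> (on a lattice
  chosen so that \<open>k\<close> is a reciprocal vector) gives a field of mean zero on which \<open>f\<close> is constant,
  hence \<open>f \<ge> 0\<close> on the range of \<open>Lhat(k)\<close>. A Hermitian form that is nonnegative on a subspace is
  stationary at each of its zeros there, so \<open>S H\<close> is orthogonal to that range for every zero \<open>H\<close>,
  i.e. it lies in the null space of \<open>Lhat(k)\<^sup>\<dagger>\<close>; this is (i). For (ii), Parseval's identity writes the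
  mean of \<open>f(E)\<close> as the sum of \<open>f\<close> over the Fourier coefficients of \<open>E\<close>, all of which vanish except
  the one at \<open>k = 0\<close>, the mean of \<open>E\<close>; and the coefficients of \<open>S E\<close> are \<open>S\<close> applied to those
  of \<open>E\<close>, so (i) applies to them.\<close>

section \<open>Lebesgue measure of linear images in \<open>real^'d\<close>\<close>

text \<open>The library's linear change of variables needs a wellordered index type, so we transport
  Lebesgue measure along a wellordered copy of an arbitrary finite index type.\<close>

typedef 'a wellordered = "UNIV :: 'a set" morphisms unwrap wrap by auto

definition nat_code :: "'a \<Rightarrow> nat" where "nat_code = (SOME f. inj f)"

lemma inj_nat_code: "inj (nat_code :: 'a::finite \<Rightarrow> nat)"
proof -
  have "\<exists>f::'a \<Rightarrow> nat. inj f"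
    using finite_imp_inj_to_nat_seg[of "UNIV::'a set"] by auto
  then show ?thesis unfolding nat_code_def by (rule someI_ex)
qed

instantiation wellordered :: (finite) linorder
begin
definition less_eq_wellordered :: "'a wellordered \<Rightarrow> 'a wellordered \<Rightarrow> bool"
  where "less_eq_wellordered x y = (nat_code (unwrap x) \<le> nat_code (unwrap y))"
definition less_wellordered :: "'a wellordered \<Rightarrow> 'a wellordered \<Rightarrow> bool"
  where "less_wellordered x y = (nat_code (unwrap x) < nat_code (unwrap y))"
instance
proof
  fix x y z :: "'a wellordered"
  have inj: "x = y" if "nat_code (unwrap x) = nat_code (unwrap y)"
    using that inj_nat_code[where 'a='a] by (simp add: inj_eq unwrap_inject)
  show "(x < y) = (x \<le> y \<and> \<not> y \<le> x)" "x \<le> x" "x \<le> y \<Longrightarrow> y \<le> z \<Longrightarrow> x \<le> z" "x \<le> y \<or> y \<le> x"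
    unfolding less_eq_wellordered_def less_wellordered_def by linarith+
  show "x \<le> y \<Longrightarrow> y \<le> x \<Longrightarrow> x = y" using inj unfolding less_eq_wellordered_def by linarith
qed
end

instance wellordered :: (finite) finite
proof
  have "UNIV = wrap ` (UNIV :: 'a set)" by (metis unwrap_inverse surj_def)
  then show "finite (UNIV :: 'a wellordered set)" by (metis finite finite_imageI)
qed

instance wellordered :: (finite) wellorder
proof
  fix P :: "'a wellordered \<Rightarrow> bool" and a :: "'a wellordered"
  assume step: "\<And>x. (\<And>y. y < x \<Longrightarrow> P y) \<Longrightarrow> P x"
  have "\<And>a. nat_code (unwrap a) = n \<Longrightarrow> P a" for n
  proof (induction n rule: less_induct)
    case (less n)
    show ?case
      by (rule step) (use less in \<open>auto simp: less_wellordered_def\<close>)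
  qed
  then show "P a" by blast
qed

lemma bij_unwrap: "bij (unwrap :: 'a wellordered \<Rightarrow> 'a)"
  by (rule bij_betwI[where g = wrap]) (auto simp: wrap_inverse unwrap_inverse)

lemma bij_wrap: "bij (wrap :: 'a \<Rightarrow> 'a wellordered)"
  by (rule bij_betwI[where g = unwrap]) (auto simp: wrap_inverse unwrap_inverse)

lemma Basis_real_vec: "(Basis :: (real^'n) set) = range (\<lambda>i. axis i 1)"
  by (auto simp: Basis_vec_def)

lemma prod_Basis_real_vec: "prod f (Basis :: (real^'n) set) = (\<Prod>i\<in>UNIV. f (axis i 1))"
  unfolding Basis_real_vec by (subst prod.reindex) (auto simp: inj_on_def axis_eq_axis)

definition reindex_vec :: "real^'d \<Rightarrow> real^('d wellordered)" where
  "reindex_vec x = (\<chi> i. x $ unwrap i)"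

definition unreindex_vec :: "real^('d wellordered) \<Rightarrow> real^'d" where
  "unreindex_vec y = (\<chi> j. y $ wrap j)"

definition reindex_mat :: "real^'d^'d \<Rightarrow> real^('d wellordered)^('d wellordered)" where
  "reindex_mat B = (\<chi> i j. B $ unwrap i $ unwrap j)"

lemma reindex_unreindex_vec [simp]: "reindex_vec (unreindex_vec y) = y"
  by (simp add: reindex_vec_def unreindex_vec_def unwrap_inverse vec_eq_iff)

lemma unreindex_reindex_vec [simp]: "unreindex_vec (reindex_vec x) = x"
  by (simp add: reindex_vec_def unreindex_vec_def wrap_inverse vec_eq_iff)

lemma linear_reindex_vec: "linear reindex_vec"
  by (rule linearI) (auto simp: reindex_vec_def vec_eq_iff)

lemma linear_unreindex_vec: "linear unreindex_vec"
  by (rule linearI) (auto simp: unreindex_vec_def vec_eq_iff)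

lemma borel_measurable_linear: "linear f \<Longrightarrow> f \<in> borel_measurable borel"
  for f :: "'a::euclidean_space \<Rightarrow> 'b::euclidean_space"
  by (intro borel_measurable_continuous_onI linear_continuous_on) (simp add: linear_conv_bounded_linear)

lemma reindex_vec_measurable [measurable]: "reindex_vec \<in> borel_measurable borel"
  by (rule borel_measurable_linear[OF linear_reindex_vec])

lemma unreindex_vec_measurable [measurable]: "unreindex_vec \<in> borel_measurable borel"
  by (rule borel_measurable_linear[OF linear_unreindex_vec])

lemma matrix_vector_mult_measurable [measurable]:
  "(\<lambda>x. (B::real^'n::finite^'m::finite) *v x) \<in> borel_measurable borel"
  by (rule borel_measurable_linear[OF matrix_vector_mul_linear])

lemma prod_unwrap: "(\<Prod>i\<in>UNIV. f (unwrap i)) = (\<Prod>j\<in>UNIV. f j :: real)"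
  by (rule prod.reindex_bij_betw[OF bij_unwrap])

lemma lborel_reindex_vec: "(lborel :: (real^('d::finite wellordered)) measure) = distr lborel borel reindex_vec"
proof (rule lborel_eqI)
  fix l u :: "real^('d wellordered)"
  assume le: "\<And>b. b \<in> Basis \<Longrightarrow> l \<bullet> b \<le> u \<bullet> b"
  have pre: "reindex_vec -` box l u = box (unreindex_vec l) (unreindex_vec u)"
    apply (auto simp: mem_box Basis_real_vec inner_axis reindex_vec_def unreindex_vec_def)
    subgoal for x i by (drule spec[of _ "wrap i"], simp add: wrap_inverse)
    subgoal for x i by (drule spec[of _ "wrap i"], simp add: wrap_inverse)
    subgoal for x i by (drule spec[of _ "unwrap i"], simp add: unwrap_inverse)
    subgoal for x i by (drule spec[of _ "unwrap i"], simp add: unwrap_inverse)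
    done
  have "l $ wrap j \<le> u $ wrap j" for j
    using le[of "axis (wrap j) 1"] by (simp add: Basis_real_vec inner_axis)
  then have le': "\<forall>b\<in>Basis. unreindex_vec l \<bullet> b \<le> unreindex_vec u \<bullet> b"
    by (auto simp: Basis_real_vec inner_axis unreindex_vec_def)
  have "emeasure (distr lborel borel reindex_vec) (box l u) = emeasure lborel (box (unreindex_vec l) (unreindex_vec u))"
    by (subst emeasure_distr) (auto simp: pre)
  also have "\<dots> = (\<Prod>b\<in>Basis. (unreindex_vec u - unreindex_vec l) \<bullet> b)"
    using le' by (simp add: emeasure_lborel_box_eq)
  also have "\<dots> = (\<Prod>b\<in>Basis. (u - l) \<bullet> b)"
    unfolding prod_Basis_real_vec inner_axis
    using prod_unwrap[of "\<lambda>j. (unreindex_vec u - unreindex_vec l) $ j"]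
    by (simp add: unreindex_vec_def unwrap_inverse)
  finally show "emeasure (distr lborel borel reindex_vec) (box l u) = (\<Prod>b\<in>Basis. (u - l) \<bullet> b)" .
qed simp

lemma permutes_conj_bij:
  fixes f :: "'b \<Rightarrow> 'a" and g :: "'a \<Rightarrow> 'b"
  assumes "p permutes UNIV" and "bij f" and "bij g"
  shows "(\<lambda>i. g (p (f i))) permutes UNIV"
proof -
  have "bij (g \<circ> p \<circ> f)"
    using assms permutes_bij by (intro bij_comp) auto
  then show ?thesis by (simp add: bij_iff permutes_univ comp_def)
qed

lemma det_reindex_mat: "det (reindex_mat B) = det (B :: real^'d::finite^'d)"
proof -
  let ?h = "\<lambda>p::'d \<Rightarrow> 'd. (\<lambda>i. wrap (p (unwrap i)))"
  have bij: "bij_betw ?h {p. p permutes (UNIV::'d set)} {p. p permutes (UNIV::'d wellordered set)}"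
    by (rule bij_betw_byWitness[where f' = "\<lambda>p. (\<lambda>j. unwrap (p (wrap j)))"])
      (auto simp: wrap_inverse unwrap_inverse bij_wrap bij_unwrap intro: permutes_conj_bij)
  have sign: "sign (?h p) = sign p" if "p permutes (UNIV :: 'd set)" for p
  proof -
    have "permutes_bij_finite p (UNIV::'d set) (UNIV :: 'd wellordered set) wrap unwrap"
      by unfold_locales (auto simp: that bij_wrap wrap_inverse)
    from permutes_bij_finite.sign_p'[OF this] show ?thesis by simp
  qed
  have "det (reindex_mat B) = (\<Sum>p\<in>{p. p permutes (UNIV::'d set)}.
      of_int (sign (?h p)) * (\<Prod>i\<in>UNIV. reindex_mat B $ i $ ?h p i))"
    unfolding det_def by (rule sum.reindex_bij_betw[OF bij, symmetric])
  also have "\<dots> = (\<Sum>p\<in>{p. p permutes (UNIV::'d set)}. of_int (sign p) * (\<Prod>i\<in>UNIV. B $ i $ p i))"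
    by (intro sum.cong refl)
      (simp add: sign reindex_mat_def wrap_inverse prod_unwrap[of "\<lambda>i. B $ i $ _ i"])
  finally show ?thesis by (simp add: det_def)
qed

lemma reindex_vec_matrix_mult: "reindex_vec (B *v x) = reindex_mat B *v reindex_vec x"
proof -
  have "(\<Sum>j\<in>UNIV. B $ unwrap i $ j * x $ j) = (\<Sum>j\<in>UNIV. B $ unwrap i $ unwrap j * x $ unwrap j)" for i
    by (rule sum.reindex_bij_betw[OF bij_unwrap, symmetric])
  then show ?thesis by (simp add: reindex_vec_def reindex_mat_def matrix_vector_mult_def vec_eq_iff)
qed

lemma reindex_vec_image: "reindex_vec ` X = unreindex_vec -` X"
  by (auto simp: image_iff) (metis reindex_unreindex_vec)

lemma reindex_vec_image_borel: "X \<in> sets borel \<Longrightarrow> reindex_vec ` X \<in> sets borel"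
  unfolding reindex_vec_image by (simp add: measurable_sets_borel[OF unreindex_vec_measurable])

lemma measure_reindex_vec_image:
  assumes "X \<in> sets borel"
  shows "measure lborel (reindex_vec ` X) = measure lborel X"
proof -
  have "measure lborel (reindex_vec ` X) = measure (distr lborel borel reindex_vec) (reindex_vec ` X)"
    by (simp add: lborel_reindex_vec[symmetric])
  also have "\<dots> = measure lborel (reindex_vec -` (reindex_vec ` X))"
    using reindex_vec_image_borel[OF assms] by (subst measure_distr) auto
  also have "reindex_vec -` (reindex_vec ` X) = X"
    by (auto simp: image_iff) (metis unreindex_reindex_vec)
  finally show ?thesis .
qed

lemma matrix_image_eq_vimage:
  assumes "invertible (B::real^'d::finite^'d)"
  obtains B' where "(\<lambda>x. B *v x) ` X = (\<lambda>x. B' *v x) -` X"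
proof -
  obtain B' where B': "B' ** B = mat 1" "B ** B' = mat 1" using assms invertible_def by blast
  have "(\<lambda>x. B *v x) ` X = (\<lambda>x. B' *v x) -` X"
    by (auto simp: image_iff matrix_vector_mul_assoc B') (metis B'(2) matrix_vector_mul_assoc matrix_vector_mul_lid)
  then show ?thesis by (rule that)
qed

lemma matrix_image_borel:
  assumes "invertible (B::real^'d::finite^'d)" and "X \<in> sets borel"
  shows "(\<lambda>x. B *v x) ` X \<in> sets borel"
proof -
  obtain B' where "(\<lambda>x. B *v x) ` X = (\<lambda>x. B' *v x) -` X"
    using matrix_image_eq_vimage[OF assms(1)] .
  then show ?thesis using measurable_sets_borel[OF matrix_vector_mult_measurable assms(2)] by simp
qed

lemma measure_lborel_matrix_image:
  fixes B :: "real^'d::finite^'d"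
  assumes X: "X \<in> sets borel" "bounded X" and B: "invertible B"
  shows "measure lborel ((\<lambda>x. B *v x) ` X) = \<bar>det B\<bar> * measure lborel X"
proof -
  have BX: "(\<lambda>x. B *v x) ` X \<in> sets borel" by (rule matrix_image_borel[OF B X(1)])
  have "reindex_vec ` X \<in> lmeasurable"
    using X bounded_linear_image[OF X(2)] linear_reindex_vec reindex_vec_image_borel[OF X(1)]
    by (intro bounded_set_imp_lmeasurable) (auto simp: linear_conv_bounded_linear sets_completionI_sets)
  note image = measure_linear_image[OF matrix_vector_mul_linear this, of "reindex_mat B"]
  have "reindex_vec ` ((\<lambda>x. B *v x) ` X) = (\<lambda>y. reindex_mat B *v y) ` (reindex_vec ` X)"
    by (auto simp: image_iff reindex_vec_matrix_mult)
  then have "measure lborel ((\<lambda>x. B *v x) ` X) = measure lebesgue ((\<lambda>y. reindex_mat B *v y) ` (reindex_vec ` X))"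
    using measure_reindex_vec_image[OF BX] reindex_vec_image_borel[OF BX] by (simp add: measure_completion)
  also have "\<dots> = \<bar>det (reindex_mat B)\<bar> * measure lebesgue (reindex_vec ` X)"
    using image by simp
  also have "measure lebesgue (reindex_vec ` X) = measure lborel X"
    using reindex_vec_image_borel[OF X(1)] measure_reindex_vec_image[OF X(1)] by (simp add: measure_completion)
  finally show ?thesis by (simp add: det_reindex_mat)
qed

lemma emeasure_lborel_matrix_image:
  fixes B :: "real^'d::finite^'d"
  assumes X: "X \<in> sets borel" "bounded X" and B: "invertible B"
  shows "emeasure lborel ((\<lambda>x. B *v x) ` X) = ennreal \<bar>det B\<bar> * emeasure lborel X"
proof -
  have bounded: "bounded ((\<lambda>x. B *v x) ` X)"
    using X(2) by (simp add: bounded_linear_image linear_conv_bounded_linear)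
  have "emeasure lborel ((\<lambda>x. B *v x) ` X) = ennreal (measure lborel ((\<lambda>x. B *v x) ` X))"
    using emeasure_bounded_finite[OF bounded] by (simp add: emeasure_eq_ennreal_measure)
  also have "\<dots> = ennreal (\<bar>det B\<bar> * measure lborel X)"
    by (simp add: measure_lborel_matrix_image[OF X B])
  also have "\<dots> = ennreal \<bar>det B\<bar> * emeasure lborel X"
    using emeasure_bounded_finite[OF X(2)] by (simp add: emeasure_eq_ennreal_measure ennreal_mult)
  finally show ?thesis .
qed

section \<open>Integrals over a period cell\<close>

definition unit_cube :: "(real^'d::finite) set" where
  "unit_cube = {y. \<forall>i. 0 \<le> y$i \<and> y$i \<le> 1}"

lemma unit_cube_eq_cbox: "unit_cube = cbox 0 1"
  by (auto simp: unit_cube_def mem_box_cart)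

lemma unit_cube_Basis: "z \<in> unit_cube \<longleftrightarrow> (\<forall>b\<in>Basis. z \<bullet> b \<in> {0..(1::real)})"
  by (auto simp: unit_cube_def Basis_real_vec inner_axis)

lemma cell_eq_image_unit_cube: "cell B = (\<lambda>y. B *v y) ` unit_cube"
  by (simp add: cell_def unit_cube_def)

lemma sets_cell [measurable]: "invertible B \<Longrightarrow> cell (B::real^'d::finite^'d) \<in> sets borel"
  unfolding cell_eq_image_unit_cube by (rule matrix_image_borel) (simp_all add: unit_cube_eq_cbox)

lemma bounded_cell: "bounded (cell (B::real^'d::finite^'d))"
  unfolding cell_eq_image_unit_cube unit_cube_eq_cbox
  by (simp add: bounded_linear_image linear_conv_bounded_linear matrix_vector_mul_linear)

lemma density_cell_eq_distr_unit_cube: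
  fixes B :: "real^'d::finite^'d"
  assumes B: "invertible B"
  shows "density lborel (indicator (cell B)) =
         distr (density lborel (\<lambda>z. ennreal \<bar>det B\<bar> * indicator unit_cube z)) borel (\<lambda>z. B *v z)"
proof (rule measure_eqI)
  fix A assume "A \<in> sets (density lborel (indicator (cell B)))"
  then have A [measurable]: "A \<in> sets borel" by simp
  have pre [measurable]: "(\<lambda>z. B *v z) -` A \<in> sets borel"
    by (simp add: measurable_sets_borel[OF matrix_vector_mult_measurable])
  have "emeasure (density lborel (indicator (cell B))) A = emeasure lborel (cell B \<inter> A)"
    using B by (subst emeasure_density) (auto simp: indicator_inter_arith[symmetric] intro!: nn_integral_cong)
  also have "cell B \<inter> A = (\<lambda>x. B *v x) ` (unit_cube \<inter> (\<lambda>z. B *v z) -` A)"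
    unfolding cell_eq_image_unit_cube by auto
  also have "emeasure lborel \<dots> = ennreal \<bar>det B\<bar> * emeasure lborel (unit_cube \<inter> (\<lambda>z. B *v z) -` A)"
    by (rule emeasure_lborel_matrix_image[OF _ _ B])
      (auto simp: unit_cube_eq_cbox intro: bounded_subset[of "cbox 0 1"])
  also have "\<dots> = emeasure (density lborel (\<lambda>z. ennreal \<bar>det B\<bar> * indicator unit_cube z)) ((\<lambda>z. B *v z) -` A)"
    by (subst emeasure_density)
      (auto simp: unit_cube_eq_cbox indicator_inter_arith[symmetric] mult.assoc nn_integral_cmult_indicator
            intro!: nn_integral_cong)
  finally show "emeasure (density lborel (indicator (cell B))) A =
    emeasure (distr (density lborel (\<lambda>z. ennreal \<bar>det B\<bar> * indicator unit_cube z)) borel (\<lambda>z. B *v z)) A"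
    by (simp add: emeasure_distr)
qed simp

lemma set_integral_cell_change_vars:
  fixes B :: "real^'d::finite^'d" and g :: "real^'d \<Rightarrow> 'b::{banach,second_countable_topology}"
  assumes B: "invertible B" and g [measurable]: "g \<in> borel_measurable borel"
  shows "(LINT x:cell B|lborel. g x) = \<bar>det B\<bar> *\<^sub>R (LINT z:unit_cube|lborel. g (B *v z))"
proof -
  have [measurable]: "unit_cube \<in> sets borel" by (simp add: unit_cube_eq_cbox)
  have ind: "(\<lambda>x. ennreal (indicator (cell B) x)) = indicator (cell B)"
    by (auto simp: fun_eq_iff split: split_indicator)
  have dens: "(\<lambda>z. ennreal \<bar>det B\<bar> * indicator unit_cube z) = (\<lambda>z. ennreal (\<bar>det B\<bar> * indicator unit_cube z))"
    by (auto simp: fun_eq_iff ennreal_mult split: split_indicator)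
  have "(LINT x:cell B|lborel. g x) = integral\<^sup>L (density lborel (\<lambda>x. ennreal (indicator (cell B) x))) g"
    unfolding set_lebesgue_integral_def using B by (subst integral_density) auto
  also have "\<dots> = integral\<^sup>L (density lborel (\<lambda>z. ennreal (\<bar>det B\<bar> * indicator unit_cube z))) (\<lambda>z. g (B *v z))"
    unfolding ind density_cell_eq_distr_unit_cube[OF B] dens[symmetric] by (subst integral_distr) auto
  also have "\<dots> = integral\<^sup>L lborel (\<lambda>z. (\<bar>det B\<bar> * indicator unit_cube z) *\<^sub>R g (B *v z))"
    by (subst integral_density) auto
  also have "\<dots> = \<bar>det B\<bar> *\<^sub>R (LINT z:unit_cube|lborel. g (B *v z))"
    unfolding set_lebesgue_integral_def by (simp add: scaleR_scaleR[symmetric] del: scaleR_scaleR)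
  finally show ?thesis .
qed

lemma lborel_integral_prod_Basis:
  fixes h :: "'a::euclidean_space \<Rightarrow> real \<Rightarrow> complex"
  assumes int: "\<And>b. b \<in> Basis \<Longrightarrow> integrable lborel (h b)"
  shows "integral\<^sup>L lborel (\<lambda>x. \<Prod>b\<in>Basis. h b (x \<bullet> b)) = (\<Prod>b\<in>Basis. integral\<^sup>L lborel (h b))"
proof -
  interpret product_sigma_finite "\<lambda>_. lborel" by standard
  have hm [measurable]: "\<And>b. b \<in> Basis \<Longrightarrow> h b \<in> borel_measurable borel"
    using int by (simp add: borel_measurable_integrable)
  have m: "(\<lambda>x. \<Prod>b\<in>Basis. h b (x \<bullet> b)) \<in> borel_measurable borel"
    by (intro borel_measurable_prod) (auto intro: measurable_compose[OF _ hm])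
  have coord: "(\<Sum>c\<in>Basis. f c *\<^sub>R c) \<bullet> b = f b" if "b \<in> Basis" for f and b :: 'a
    using that by (simp add: inner_sum_left inner_Basis if_distrib cong: if_cong)
  have "integral\<^sup>L lborel (\<lambda>x. \<Prod>b\<in>Basis. h b (x \<bullet> b)) =
        integral\<^sup>L (\<Pi>\<^sub>M b\<in>Basis. lborel) (\<lambda>f. \<Prod>b\<in>Basis. h b ((\<Sum>c\<in>(Basis::'a set). f c *\<^sub>R c) \<bullet> b))"
    by (subst lborel_eq) (rule integral_distr[OF _ m], simp)
  also have "\<dots> = integral\<^sup>L (\<Pi>\<^sub>M b\<in>Basis. lborel) (\<lambda>f. \<Prod>b\<in>Basis. h b (f b))"
    by (intro Bochner_Integration.integral_cong prod.cong) (simp_all add: coord)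
  also have "\<dots> = (\<Prod>b\<in>Basis. integral\<^sup>L lborel (h b))"
    by (rule product_integral_prod) (auto intro: int)
  finally show ?thesis .
qed

lemma integral_unit_interval_exp:
  fixes c :: real
  assumes "exp (\<i> * complex_of_real c) = 1"
  shows "integral\<^sup>L lborel (\<lambda>s. indicator {0..1} s *\<^sub>R exp (\<i> * complex_of_real (c * s))) = (if c = 0 then 1 else 0)"
proof (cases "c = 0")
  case True
  have "integral\<^sup>L lborel (\<lambda>s::real. indicator {0..1} s *\<^sub>R (1::complex)) = complex_of_real 1 - complex_of_real 0"
    by (rule integral_FTC_atLeastAtMost)
      (auto intro!: derivative_eq_intros simp: has_vector_derivative_def has_derivative_of_real, simp add: fun_eq_iff of_real_def)
  then show ?thesis using True by simp
next
  case False
  let ?F = "\<lambda>s. exp (\<i> * complex_of_real (c * s)) / (\<i> * complex_of_real c)"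
  have "integral\<^sup>L lborel (\<lambda>s. indicator {0..1} s *\<^sub>R exp (\<i> * complex_of_real (c * s))) = ?F 1 - ?F 0"
  proof (rule integral_FTC_atLeastAtMost)
    fix x :: real
    have "((\<lambda>z. exp (\<i> * complex_of_real c * z) / (\<i> * complex_of_real c)) has_field_derivative
          exp (\<i> * complex_of_real c * complex_of_real x)) (at (complex_of_real x))"
      using False by (auto intro!: derivative_eq_intros simp: field_simps)
    from has_vector_derivative_real_field[OF this]
    show "(?F has_vector_derivative exp (\<i> * complex_of_real (c * x))) (at x within {0..1})"
      by (simp add: mult.assoc)
  qed (simp_all add: continuous_intros)
  then show ?thesis using False assms by simp
qed

lemma unit_cube_integral_exp:
  fixes m :: "real^'d::finite"
  assumes m: "\<And>j. exp (\<i> * complex_of_real (m $ j)) = 1"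
  shows "(LINT z:unit_cube|lborel. exp (\<i> * complex_of_real (m \<bullet> z))) = (if m = 0 then 1 else 0)"
proof -
  define h where "h b s = complex_of_real (indicator {0..1} s) * exp (\<i> * complex_of_real ((m \<bullet> b) * s))" for b s
  have h_scaleR: "h b = (\<lambda>s. indicator {0..1} s *\<^sub>R exp (\<i> * complex_of_real ((m \<bullet> b) * s)))" for b
    by (simp add: h_def fun_eq_iff scaleR_conv_of_real)
  have h_int: "integrable lborel (h b)" for b
    unfolding h_scaleR by (rule borel_integrable_compact) (simp, intro continuous_intros)
  have h_val: "integral\<^sup>L lborel (h b) = (if m \<bullet> b = 0 then 1 else 0)" if "b \<in> Basis" for b
  proof -
    from that obtain j where "b = axis j 1" unfolding Basis_real_vec by blast
    then show ?thesis unfolding h_scaleR by (intro integral_unit_interval_exp) (simp add: inner_axis m)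
  qed
  have ind: "(\<Prod>b\<in>Basis. complex_of_real (indicator {0..1} (z \<bullet> b))) = complex_of_real (indicator unit_cube z)" for z
  proof (cases "z \<in> unit_cube")
    case False
    then obtain b where "b \<in> Basis" "z \<bullet> b \<notin> {0..1}" by (auto simp: unit_cube_Basis)
    then show ?thesis using False by (intro prod_zero[THEN trans]) (auto intro!: bexI[of _ b])
  qed (simp add: unit_cube_Basis)
  have "indicator unit_cube z *\<^sub>R exp (\<i> * complex_of_real (m \<bullet> z)) = (\<Prod>b\<in>Basis. h b (z \<bullet> b))" for z
    by (simp add: h_def prod.distrib ind scaleR_conv_of_real euclidean_inner[of m z] exp_sum[symmetric]
        sum_distrib_left)
  then have "(LINT z:unit_cube|lborel. exp (\<i> * complex_of_real (m \<bullet> z))) = (\<Prod>b\<in>Basis. integral\<^sup>L lborel (h b))"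
    unfolding set_lebesgue_integral_def by (simp add: lborel_integral_prod_Basis[OF h_int])
  also have "\<dots> = (\<Prod>b\<in>Basis. (if m \<bullet> b = 0 then 1 else 0))"
    by (rule prod.cong) (auto simp: h_val)
  also have "\<dots> = (if m = 0 then 1 else 0)"
  proof (cases "m = 0")
    case False
    then obtain b where "b \<in> Basis" "m \<bullet> b \<noteq> 0" using euclidean_all_zero_iff by blast
    then show ?thesis using False by (intro prod_zero[THEN trans]) auto
  qed simp
  finally show ?thesis .
qed

lemma emeasure_cell_finite: "emeasure lborel (cell (B::real^'d::finite^'d)) < \<infinity>"
  by (rule emeasure_bounded_finite[OF bounded_cell])

lemma measure_cell: "invertible B \<Longrightarrow> measure lborel (cell (B::real^'d::finite^'d)) = \<bar>det B\<bar>"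
proof -
  have "\<forall>b\<in>Basis. (1::real^'d) \<bullet> b = 1" by (auto simp: Basis_real_vec inner_axis)
  then show "invertible B \<Longrightarrow> ?thesis"
    unfolding cell_eq_image_unit_cube unit_cube_eq_cbox
    by (subst measure_lborel_matrix_image) (auto simp: measure_lborel_cbox_eq)
qed

lemma avg_const: "invertible B \<Longrightarrow> avg B (\<lambda>_. c) = c"
  using set_integral_const[of "cell B" lborel c] emeasure_cell_finite[of B]
  by (simp add: avg_def measure_cell invertible_det_nz)

lemma set_integrable_cell_bounded:
  fixes g :: "real^'d::finite \<Rightarrow> 'b::{banach,second_countable_topology}"
  assumes B: "invertible (B::real^'d^'d)" and g: "g \<in> borel_measurable borel" and K: "\<And>x. norm (g x) \<le> K"
  shows "set_integrable lborel (cell B) g"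
proof (rule set_integrable_bound[where f="\<lambda>_. K"])
  show "set_integrable lborel (cell B) (\<lambda>_. K)"
    using B emeasure_cell_finite unfolding set_integrable_def
    by (intro integrable_scaleR_left integrable_real_indicator) auto
  show "set_borel_measurable lborel (cell B) g"
    unfolding set_borel_measurable_def using g B by measurable
qed (use K in \<open>auto intro: order_trans[OF _ abs_ge_self]\<close>)

lemma set_integrable_cell_const: "invertible B \<Longrightarrow> set_integrable lborel (cell B) (\<lambda>_. c)"
  for c :: "'b::{banach,second_countable_topology}"
  by (rule set_integrable_cell_bounded[of _ _ "norm c"]) auto

lemma set_integrable_cell_dominated:
  fixes g :: "real^'d::finite \<Rightarrow> 'b::{banach,second_countable_topology}" and f :: "real^'d \<Rightarrow> real"
  assumes B: "invertible (B::real^'d^'d)" and g: "g \<in> borel_measurable borel"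
    and f: "set_integrable lborel (cell B) f" and le: "\<And>x. norm (g x) \<le> f x"
  shows "set_integrable lborel (cell B) g"
proof (rule set_integrable_bound[OF f])
  show "set_borel_measurable lborel (cell B) g"
    unfolding set_borel_measurable_def using g B by measurable
qed (use le in \<open>auto intro: order_trans[OF _ abs_ge_self]\<close>)

definition plane_wave :: "real^'d::finite \<Rightarrow> real^'d \<Rightarrow> complex" where
  "plane_wave k x = exp (\<i> * complex_of_real (k \<bullet> x))"

lemma norm_plane_wave [simp]: "cmod (plane_wave k x) = 1"
  by (simp add: plane_wave_def)

lemma cnj_plane_wave_mult: "cnj (plane_wave k x) * plane_wave k' x = plane_wave (k' - k) x"
  by (simp add: plane_wave_def exp_cnj exp_add[symmetric] inner_diff_left algebra_simps)

lemma continuous_on_plane_wave [continuous_intros]: "continuous_on A (plane_wave k)"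
  unfolding plane_wave_def by (intro continuous_intros)

lemma plane_wave_measurable [measurable]: "plane_wave k \<in> borel_measurable borel"
  by (intro borel_measurable_continuous_onI continuous_on_plane_wave)

lemma set_integrable_cell_plane_wave_mult:
  "invertible B \<Longrightarrow> set_integrable lborel (cell B) (\<lambda>x. c * plane_wave k x)"
  by (rule set_integrable_cell_bounded[of _ _ "cmod c"]) (auto simp: norm_mult)

lemma recip_lattice_basis:
  assumes "k \<in> recip (B::real^'d::finite^'d)"
  shows "exp (\<i> * complex_of_real (k \<bullet> (B *v axis j 1))) = 1"
proof -
  have "(\<chi> i. real_of_int ((axis j 1 :: int^'d) $ i)) = axis j 1" by (simp add: vec_eq_iff axis_def)
  then have "B *v axis j 1 \<in> lattice B"
    unfolding lattice_def by (intro range_eqI[where x = "axis j 1"]) simp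
  with assms have "exp (\<i> * complex_of_real (k \<bullet> (0 + B *v axis j 1))) = exp (\<i> * complex_of_real (k \<bullet> 0))"
    unfolding recip_def by blast
  then show ?thesis by simp
qed

lemma zero_in_recip: "0 \<in> recip B"
  by (simp add: recip_def)

lemma recip_diff:
  assumes "k \<in> recip B" "k' \<in> recip B"
  shows "k - k' \<in> recip B"
proof -
  have shift: "exp (\<i> * complex_of_real (q \<bullet> (x + lam))) = exp (\<i> * complex_of_real (q \<bullet> x)) * exp (\<i> * complex_of_real (q \<bullet> lam))"
    for q x lam :: "real^'d"
    by (simp add: exp_add[symmetric] algebra_simps inner_add_right)
  have period: "exp (\<i> * complex_of_real (q \<bullet> lam)) = 1" if "q \<in> recip B" "lam \<in> lattice B" for q lam
  proof -
    from that have "exp (\<i> * complex_of_real (q \<bullet> (0 + lam))) = exp (\<i> * complex_of_real (q \<bullet> 0))"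
      unfolding recip_def by blast
    then show ?thesis by simp
  qed
  have "exp (\<i> * complex_of_real ((k - k') \<bullet> lam)) = 1" if "lam \<in> lattice B" for lam
    using period[OF assms(1) that] period[OF assms(2) that]
    by (simp add: inner_diff_left exp_diff algebra_simps)
  then show ?thesis
    unfolding recip_def by (simp add: shift)
qed

lemma cell_integral_plane_wave:
  fixes B :: "real^'d::finite^'d"
  assumes B: "invertible B" and k: "k \<in> recip B"
  shows "(LINT x:cell B|lborel. plane_wave k x) = (if k = 0 then complex_of_real \<bar>det B\<bar> else 0)"
proof -
  have "(LINT x:cell B|lborel. plane_wave k x) =
        \<bar>det B\<bar> *\<^sub>R (LINT z:unit_cube|lborel. exp (\<i> * complex_of_real ((k v* B) \<bullet> z)))"
    by (simp add: set_integral_cell_change_vars[OF B] plane_wave_def dot_lmul_matrix)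
  also have "(LINT z:unit_cube|lborel. exp (\<i> * complex_of_real ((k v* B) \<bullet> z))) = (if k v* B = 0 then 1 else 0)"
  proof (rule unit_cube_integral_exp)
    fix j
    have "(k v* B) $ j = (k v* B) \<bullet> axis j 1" by (simp add: inner_axis)
    also have "\<dots> = k \<bullet> (B *v axis j 1)" by (rule dot_lmul_matrix)
    finally have "(k v* B) $ j = k \<bullet> (B *v axis j 1)" .
    then show "exp (\<i> * complex_of_real ((k v* B) $ j)) = 1" using recip_lattice_basis[OF k] by simp
  qed
  also have "(k v* B = 0) = (k = 0)"
  proof
    assume "k v* B = 0"
    obtain B' where "B ** B' = mat 1" using B invertible_def by blast
    then have "k = (k v* B) v* B'" by (simp add: vector_matrix_mul_assoc)
    then show "k = 0" using \<open>k v* B = 0\<close> by simp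
  qed simp
  finally show ?thesis by (simp add: scaleR_conv_of_real)
qed

lemma cell_integral_plane_wave_orthogonal:
  assumes B: "invertible B" and "k \<in> recip B" "k' \<in> recip B"
  shows "(LINT x:cell B|lborel. cnj (plane_wave k x) * plane_wave k' x) = (if k = k' then complex_of_real \<bar>det B\<bar> else 0)"
  unfolding cnj_plane_wave_mult using cell_integral_plane_wave[OF B recip_diff[OF assms(3,2)]] by auto

lemma set_integral_norm_le:
  fixes f :: "'a \<Rightarrow> 'b::{banach,second_countable_topology}"
  assumes "set_integrable M A f" "set_integrable M A g" "\<And>x. x \<in> A \<Longrightarrow> norm (f x) \<le> g x"
  shows "norm (LINT x:A|M. f x) \<le> (LINT x:A|M. g x)"
  using set_integral_norm_bound[OF assms(1)] set_integral_mono[OF set_integrable_norm[OF assms(1)] assms(2,3)]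
  by linarith

lemma set_integral_sum:
  fixes f :: "'i \<Rightarrow> 'a \<Rightarrow> 'b::{banach,second_countable_topology}"
  assumes "\<And>i. i \<in> I \<Longrightarrow> set_integrable M A (f i)"
  shows "set_integrable M A (\<lambda>x. \<Sum>i\<in>I. f i x)"
    and "(LINT x:A|M. (\<Sum>i\<in>I. f i x)) = (\<Sum>i\<in>I. (LINT x:A|M. f i x))"
  using assms unfolding set_lebesgue_integral_def set_integrable_def
  by (simp_all add: scaleR_sum_right integral_sum)

lemma set_integral_nonneg:
  fixes f :: "'a \<Rightarrow> real"
  shows "(\<And>x. 0 \<le> f x) \<Longrightarrow> 0 \<le> (LINT x:A|M. f x)"
  unfolding set_lebesgue_integral_def by (intro integral_nonneg_AE) (auto simp: indicator_def)

lemma borel_measurable_cnj [measurable]: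
  fixes f :: "'a \<Rightarrow> complex"
  assumes "f \<in> borel_measurable M"
  shows "(\<lambda>x. cnj (f x)) \<in> borel_measurable M"
  using measurable_compose[OF assms, of cnj] by (simp add: borel_measurable_continuous_onI continuous_on_cnj continuous_on_id)

lemma cmod_mult_le_weighted_squares:
  fixes a b :: complex
  assumes "e > 0"
  shows "cmod a * cmod b \<le> e / 2 * (cmod b)^2 + (cmod a)^2 / (2 * e)"
proof -
  have "0 \<le> (e * cmod b - cmod a)^2" by simp
  then have "2 * e * (cmod a * cmod b) \<le> e^2 * (cmod b)^2 + (cmod a)^2"
    by (simp add: power2_eq_square algebra_simps)
  then show ?thesis using assms by (simp add: field_simps power2_eq_square)
qed

lemma cmod_diff_squared_le: "(cmod (a - b))^2 \<le> 2 * (cmod a)^2 + 2 * (cmod b)^2"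
proof -
  have "(cmod (a - b))^2 \<le> (cmod a + cmod b)^2" by (simp add: power_mono norm_triangle_ineq4)
  also have "\<dots> \<le> 2 * (cmod a)^2 + 2 * (cmod b)^2"
    using sum_squares_ge_zero[of "cmod a - cmod b" 0] by (simp add: power2_eq_square algebra_simps)
  finally show ?thesis .
qed

lemma set_integrable_cell_cnj_mult:
  assumes B: "invertible B" and [measurable]: "f \<in> borel_measurable borel" "g \<in> borel_measurable borel"
    and f2: "set_integrable lborel (cell B) (\<lambda>x. (cmod (f x))^2)"
    and g2: "set_integrable lborel (cell B) (\<lambda>x. (cmod (g x))^2)"
  shows "set_integrable lborel (cell B) (\<lambda>x. cnj (f x) * g x)"
proof (rule set_integrable_cell_dominated[OF B])
  show "set_integrable lborel (cell B) (\<lambda>x. (cmod (g x))^2 / 2 + (cmod (f x))^2 / 2)"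
    using f2 g2 by (intro set_integral_add set_integrable_divide) auto
  show "norm (cnj (f x) * g x) \<le> (cmod (g x))^2 / 2 + (cmod (f x))^2 / 2" for x
    using cmod_mult_le_weighted_squares[of 1 "f x" "g x"] by (simp add: norm_mult)
qed measurable

text \<open>A Cauchy--Schwarz substitute with a free weight \<open>e\<close>, avoiding square roots.\<close>

lemma norm_cell_integral_cnj_mult_le:
  assumes B: "invertible B" and e: "e > 0" and [measurable]: "f \<in> borel_measurable borel" "g \<in> borel_measurable borel"
    and f2: "set_integrable lborel (cell B) (\<lambda>x. (cmod (f x))^2)"
    and g2: "set_integrable lborel (cell B) (\<lambda>x. (cmod (g x))^2)"
  shows "norm (LINT x:cell B|lborel. cnj (f x) * g x)
    \<le> e / 2 * (LINT x:cell B|lborel. (cmod (g x))^2) + (LINT x:cell B|lborel. (cmod (f x))^2) / (2 * e)"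
proof -
  have "norm (LINT x:cell B|lborel. cnj (f x) * g x)
      \<le> (LINT x:cell B|lborel. e / 2 * (cmod (g x))^2 + (cmod (f x))^2 / (2 * e))"
    using cmod_mult_le_weighted_squares[OF e] f2 g2
    by (intro set_integral_norm_le set_integrable_cell_cnj_mult[OF B] set_integral_add set_integrable_divide)
      (auto simp: norm_mult)
  also have "\<dots> = e / 2 * (LINT x:cell B|lborel. (cmod (g x))^2) + (LINT x:cell B|lborel. (cmod (f x))^2) / (2 * e)"
    using f2 g2 by (simp add: set_integral_add)
  finally show ?thesis .
qed

lemma tendsto_by_weighted_bound:
  fixes c :: "'i \<Rightarrow> 'b::real_normed_vector"
  assumes \<delta>: "(\<delta> \<longlongrightarrow> 0) F" and M: "M \<ge> 0"
    and bound: "\<And>e. e > 0 \<Longrightarrow> eventually (\<lambda>i. norm (c i - L) \<le> e * M + (e + 1/e) * \<delta> i) F"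
  shows "(c \<longlongrightarrow> L) F"
proof (rule tendstoI)
  fix \<eta> :: real assume \<eta>: "\<eta> > 0"
  define e where "e = \<eta> / (2 * (M + 1))"
  have e: "e > 0" and eM: "e * M < \<eta> / 2" using \<eta> M by (simp_all add: e_def field_simps)
  have w: "e + 1/e > 0" using e by (simp add: add_pos_pos)
  have "eventually (\<lambda>i. \<bar>\<delta> i\<bar> < \<eta> / (4 * (e + 1/e))) F"
    using tendstoD[OF \<delta>, of "\<eta> / (4 * (e + 1/e))"] e \<eta> w by (simp add: dist_real_def)
  with bound[OF e] show "eventually (\<lambda>i. dist (c i) L < \<eta>) F"
  proof eventually_elim
    case (elim i)
    have "(e + 1/e) * \<delta> i \<le> (e + 1/e) * (\<eta> / (4 * (e + 1/e)))"
      using elim(2) w by (intro mult_left_mono) auto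
    also have "\<dots> = \<eta> / 4" using w by (simp add: field_simps)
    finally show ?case unfolding dist_norm using elim(1) eM \<eta> by linarith
  qed
qed

section \<open>Square-summable Fourier series on a period cell\<close>

definition has_L2_fourier_scalar :: "real^'d::finite^'d \<Rightarrow> (real^'d \<Rightarrow> complex) \<Rightarrow> (real^'d \<Rightarrow> complex) \<Rightarrow> bool" where
  "has_L2_fourier_scalar B u \<alpha> \<longleftrightarrow> u \<in> borel_measurable borel
     \<and> set_integrable lborel (cell B) (\<lambda>x. (cmod (u x))^2)
     \<and> ((\<lambda>F. LINT x:cell B|lborel. (cmod (u x - (\<Sum>k\<in>F. plane_wave k x * \<alpha> k)))^2) \<longlongrightarrow> 0)
         (finite_subsets_at_top (recip B))"

lemma norm_plane_wave_sum_le: "cmod (\<Sum>k\<in>F. plane_wave k x * \<alpha> k) \<le> (\<Sum>k\<in>F. cmod (\<alpha> k))"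
  by (rule order_trans[OF norm_sum]) (simp add: norm_mult)

lemma set_integrable_cell_plane_wave_sum_squared:
  "invertible B \<Longrightarrow> set_integrable lborel (cell B) (\<lambda>x. (cmod (\<Sum>k\<in>F. plane_wave k x * \<alpha> k))^2)"
  by (rule set_integrable_cell_bounded[of _ _ "(\<Sum>k\<in>F. cmod (\<alpha> k))^2"])
    (auto intro!: power_mono norm_plane_wave_sum_le)

lemma set_integrable_cell_residual_squared:
  assumes B: "invertible B" and [measurable]: "u \<in> borel_measurable borel"
    and u2: "set_integrable lborel (cell B) (\<lambda>x. (cmod (u x))^2)"
  shows "set_integrable lborel (cell B) (\<lambda>x. (cmod (u x - (\<Sum>k\<in>F. plane_wave k x * \<alpha> k)))^2)"
proof (rule set_integrable_cell_dominated[OF B])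
  show "set_integrable lborel (cell B) (\<lambda>x. 2 * (cmod (u x))^2 + 2 * (cmod (\<Sum>k\<in>F. plane_wave k x * \<alpha> k))^2)"
    using u2 set_integrable_cell_plane_wave_sum_squared[OF B] by (intro set_integral_add) auto
qed (use cmod_diff_squared_le in auto)

lemma cell_integral_cnj_plane_wave_sums:
  assumes B: "invertible B" and F: "finite F" "F \<subseteq> recip B"
  shows "(LINT x:cell B|lborel. cnj (\<Sum>k\<in>F. plane_wave k x * \<alpha> k) * (\<Sum>k\<in>F. plane_wave k x * \<beta> k))
         = complex_of_real \<bar>det B\<bar> * (\<Sum>k\<in>F. cnj (\<alpha> k) * \<beta> k)"
proof -
  have int: "set_integrable lborel (cell B) (\<lambda>x. c * (cnj (plane_wave k x) * plane_wave k' x))" for c k k'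
    using set_integrable_cell_plane_wave_mult[OF B] by (simp add: cnj_plane_wave_mult)
  have "(LINT x:cell B|lborel. cnj (\<Sum>k\<in>F. plane_wave k x * \<alpha> k) * (\<Sum>k\<in>F. plane_wave k x * \<beta> k))
      = (LINT x:cell B|lborel. \<Sum>k\<in>F. \<Sum>k'\<in>F. (cnj (\<alpha> k) * \<beta> k') * (cnj (plane_wave k x) * plane_wave k' x))"
    by (simp only: cnj_sum sum_product complex_cnj_mult) (simp add: mult_ac)
  also have "\<dots> = (\<Sum>k\<in>F. \<Sum>k'\<in>F. (cnj (\<alpha> k) * \<beta> k') * (if k = k' then complex_of_real \<bar>det B\<bar> else 0))"
    using F by (simp add: set_integral_sum int cell_integral_plane_wave_orthogonal[OF B] subsetD)
  also have "\<dots> = complex_of_real \<bar>det B\<bar> * (\<Sum>k\<in>F. cnj (\<alpha> k) * \<beta> k)"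
    using F by (simp add: if_distrib sum_distrib_left mult.commute cong: if_cong)
  finally show ?thesis .
qed

lemma cell_integral_cnj_mult_diff:
  assumes B: "invertible B"
    and [measurable]: "u \<in> borel_measurable borel" "w \<in> borel_measurable borel"
      "U \<in> borel_measurable borel" "W \<in> borel_measurable borel"
    and w2: "set_integrable lborel (cell B) (\<lambda>x. (cmod (w x))^2)"
    and U2: "set_integrable lborel (cell B) (\<lambda>x. (cmod (U x))^2)"
    and W2: "set_integrable lborel (cell B) (\<lambda>x. (cmod (W x))^2)"
    and dU2: "set_integrable lborel (cell B) (\<lambda>x. (cmod (u x - U x))^2)"
    and dW2: "set_integrable lborel (cell B) (\<lambda>x. (cmod (w x - W x))^2)"
  shows "(LINT x:cell B|lborel. cnj (u x) * w x) - (LINT x:cell B|lborel. cnj (U x) * W x)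
    = (LINT x:cell B|lborel. cnj (u x - U x) * w x) + (LINT x:cell B|lborel. cnj (U x) * (w x - W x))"
proof -
  have split: "cnj (u x) * w x = cnj (U x) * W x + (cnj (u x - U x) * w x + cnj (U x) * (w x - W x))" for x
    by (simp add: algebra_simps)
  have i1: "set_integrable lborel (cell B) (\<lambda>x. cnj (U x) * W x)"
    and i2: "set_integrable lborel (cell B) (\<lambda>x. cnj (u x - U x) * w x)"
    and i3: "set_integrable lborel (cell B) (\<lambda>x. cnj (U x) * (w x - W x))"
    using U2 W2 dU2 dW2 w2 by (intro set_integrable_cell_cnj_mult[OF B]; simp)+
  show ?thesis
    unfolding split
    by (simp only: set_integral_add(2)[OF i1 set_integral_add(1)[OF i2 i3]] set_integral_add(2)[OF i2 i3]) simp
qed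

lemma set_integral_cmod_squared_le:
  assumes u2: "set_integrable M A (\<lambda>x. (cmod (u x))^2)"
    and v2: "set_integrable M A (\<lambda>x. (cmod (v x))^2)"
    and d2: "set_integrable M A (\<lambda>x. (cmod (u x - v x))^2)"
  shows "(LINT x:A|M. (cmod (v x))^2) \<le> 2 * (LINT x:A|M. (cmod (u x))^2) + 2 * (LINT x:A|M. (cmod (u x - v x))^2)"
proof -
  have "(LINT x:A|M. (cmod (v x))^2) \<le> (LINT x:A|M. 2 * (cmod (u x))^2 + 2 * (cmod (u x - v x))^2)"
    using cmod_diff_squared_le[of "u x" "u x - v x" for x]
    by (intro set_integral_mono v2 set_integral_add set_integrable_mult_right u2 d2) auto
  also have "\<dots> = 2 * (LINT x:A|M. (cmod (u x))^2) + 2 * (LINT x:A|M. (cmod (u x - v x))^2)"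
    using u2 d2 by (simp add: set_integral_add)
  finally show ?thesis .
qed

lemma has_L2_fourier_scalar_inner_error:
  assumes B: "invertible B" and [measurable]: "u \<in> borel_measurable borel" "w \<in> borel_measurable borel"
    and u2: "set_integrable lborel (cell B) (\<lambda>x. (cmod (u x))^2)"
    and w2: "set_integrable lborel (cell B) (\<lambda>x. (cmod (w x))^2)"
    and F: "finite F" "F \<subseteq> recip B" and e: "e > 0"
  shows "norm (complex_of_real \<bar>det B\<bar> * (\<Sum>k\<in>F. cnj (\<alpha> k) * \<beta> k) - (LINT x:cell B|lborel. cnj (u x) * w x))
    \<le> e * ((LINT x:cell B|lborel. (cmod (w x))^2) / 2 + (LINT x:cell B|lborel. (cmod (u x))^2))
      + (e + 1/e) * ((LINT x:cell B|lborel. (cmod (u x - (\<Sum>k\<in>F. plane_wave k x * \<alpha> k)))^2)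
                   + (LINT x:cell B|lborel. (cmod (w x - (\<Sum>k\<in>F. plane_wave k x * \<beta> k)))^2))"
proof -
  let ?C = "cell B"
  define U where "U x = (\<Sum>k\<in>F. plane_wave k x * \<alpha> k)" for x
  define W where "W x = (\<Sum>k\<in>F. plane_wave k x * \<beta> k)" for x
  define Iu where "Iu = (LINT x:?C|lborel. (cmod (u x))^2)"
  define Iw where "Iw = (LINT x:?C|lborel. (cmod (w x))^2)"
  define du where "du = (LINT x:?C|lborel. (cmod (u x - U x))^2)"
  define dw where "dw = (LINT x:?C|lborel. (cmod (w x - W x))^2)"
  have [measurable]: "U \<in> borel_measurable borel" "W \<in> borel_measurable borel"
    unfolding U_def W_def by measurable
  have U2: "set_integrable lborel ?C (\<lambda>x. (cmod (U x))^2)"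
    and W2: "set_integrable lborel ?C (\<lambda>x. (cmod (W x))^2)"
    unfolding U_def W_def by (intro set_integrable_cell_plane_wave_sum_squared[OF B])+
  have dU2: "set_integrable lborel ?C (\<lambda>x. (cmod (u x - U x))^2)"
    and dW2: "set_integrable lborel ?C (\<lambda>x. (cmod (w x - W x))^2)"
    unfolding U_def W_def by (intro set_integrable_cell_residual_squared[OF B] u2 w2; simp)+
  have "(LINT x:?C|lborel. cnj (U x) * W x) = complex_of_real \<bar>det B\<bar> * (\<Sum>k\<in>F. cnj (\<alpha> k) * \<beta> k)"
    unfolding U_def W_def by (rule cell_integral_cnj_plane_wave_sums[OF B F])
  with cell_integral_cnj_mult_diff[OF B _ _ _ _ w2 U2 W2 dU2 dW2]
  have "complex_of_real \<bar>det B\<bar> * (\<Sum>k\<in>F. cnj (\<alpha> k) * \<beta> k) - (LINT x:?C|lborel. cnj (u x) * w x)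
      = - ((LINT x:?C|lborel. cnj (u x - U x) * w x) + (LINT x:?C|lborel. cnj (U x) * (w x - W x)))"
    by (simp add: algebra_simps)
  then have "norm (complex_of_real \<bar>det B\<bar> * (\<Sum>k\<in>F. cnj (\<alpha> k) * \<beta> k) - (LINT x:?C|lborel. cnj (u x) * w x))
      \<le> norm (LINT x:?C|lborel. cnj (u x - U x) * w x) + norm (LINT x:?C|lborel. cnj (U x) * (w x - W x))"
    by (simp only: norm_minus_cancel norm_triangle_ineq)
  also have "\<dots> \<le> (e / 2 * Iw + du / (2 * e)) + ((1/e) / 2 * dw + (LINT x:?C|lborel. (cmod (U x))^2) / (2 * (1/e)))"
    unfolding Iw_def du_def dw_def using e u2 w2 U2 dU2 dW2
    by (intro add_mono norm_cell_integral_cnj_mult_le[OF B]) auto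
  also have "\<dots> \<le> (e / 2 * Iw + du / (2 * e)) + ((1/e) / 2 * dw + (2 * Iu + 2 * du) / (2 * (1/e)))"
    unfolding Iu_def du_def using e set_integral_cmod_squared_le[OF u2 U2 dU2] by (simp add: divide_right_mono)
  also have "\<dots> \<le> e * (Iw / 2 + Iu) + (e + 1/e) * (du + dw)"
    using e set_integral_nonneg[of "\<lambda>x. (cmod (u x - U x))^2"] set_integral_nonneg[of "\<lambda>x. (cmod (w x - W x))^2"]
    by (simp add: du_def dw_def field_simps)
  finally show ?thesis
    by (simp add: Iu_def Iw_def du_def dw_def U_def W_def)
qed

lemma has_L2_fourier_scalar_parseval:
  assumes B: "invertible B" and u: "has_L2_fourier_scalar B u \<alpha>" and w: "has_L2_fourier_scalar B w \<beta>"
  shows "((\<lambda>k. cnj (\<alpha> k) * \<beta> k) has_sum avg B (\<lambda>x. cnj (u x) * w x)) (recip B)"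
proof -
  let ?C = "cell B" and ?V = "complex_of_real \<bar>det B\<bar>"
  have [measurable]: "u \<in> borel_measurable borel" "w \<in> borel_measurable borel"
    and u2: "set_integrable lborel ?C (\<lambda>x. (cmod (u x))^2)"
    and w2: "set_integrable lborel ?C (\<lambda>x. (cmod (w x))^2)"
    and ul: "((\<lambda>F. LINT x:?C|lborel. (cmod (u x - (\<Sum>k\<in>F. plane_wave k x * \<alpha> k)))^2) \<longlongrightarrow> 0)
               (finite_subsets_at_top (recip B))"
    and wl: "((\<lambda>F. LINT x:?C|lborel. (cmod (w x - (\<Sum>k\<in>F. plane_wave k x * \<beta> k)))^2) \<longlongrightarrow> 0)
               (finite_subsets_at_top (recip B))"
    using u w unfolding has_L2_fourier_scalar_def by auto
  let ?M = "(LINT x:?C|lborel. (cmod (w x))^2) / 2 + (LINT x:?C|lborel. (cmod (u x))^2)"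
  have "((\<lambda>F. ?V * (\<Sum>k\<in>F. cnj (\<alpha> k) * \<beta> k)) \<longlongrightarrow> (LINT x:?C|lborel. cnj (u x) * w x)) (finite_subsets_at_top (recip B))"
  proof (rule tendsto_by_weighted_bound[where M = ?M])
    show "?M \<ge> 0" by (intro add_nonneg_nonneg divide_nonneg_nonneg set_integral_nonneg) auto
    show "((\<lambda>F. (LINT x:?C|lborel. (cmod (u x - (\<Sum>k\<in>F. plane_wave k x * \<alpha> k)))^2)
             + (LINT x:?C|lborel. (cmod (w x - (\<Sum>k\<in>F. plane_wave k x * \<beta> k)))^2)) \<longlongrightarrow> 0)
          (finite_subsets_at_top (recip B))"
      using tendsto_add[OF ul wl] by simp
  next
    fix e :: real assume "e > 0"
    then show "eventually (\<lambda>F. norm (?V * (\<Sum>k\<in>F. cnj (\<alpha> k) * \<beta> k) - (LINT x:?C|lborel. cnj (u x) * w x))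
        \<le> e * ?M + (e + 1/e) * ((LINT x:?C|lborel. (cmod (u x - (\<Sum>k\<in>F. plane_wave k x * \<alpha> k)))^2)
             + (LINT x:?C|lborel. (cmod (w x - (\<Sum>k\<in>F. plane_wave k x * \<beta> k)))^2))) (finite_subsets_at_top (recip B))"
      by (intro eventually_finite_subsets_at_top_weakI has_L2_fourier_scalar_inner_error[OF B _ _ u2 w2]) simp_all
  qed
  from tendsto_mult_left[OF this, of "inverse ?V"]
  show ?thesis
    using invertible_det_nz[of B] B
    by (simp add: has_sum_def avg_def scaleR_conv_of_real field_simps)
qed

lemma eventually_finite_subsets_at_top_contains:
  "k \<in> A \<Longrightarrow> eventually (\<lambda>F. finite F \<and> k \<in> F \<and> F \<subseteq> A) (finite_subsets_at_top A)"
  unfolding eventually_finite_subsets_at_top by (intro exI[of _ "{k}"]) auto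

lemma has_sum_single:
  assumes "k \<in> A" and "\<And>k'. k' \<in> A \<Longrightarrow> k' \<noteq> k \<Longrightarrow> f k' = 0"
  shows "(f has_sum f k) A"
  using has_sum_cong_neutral[of A "{k}" f f] has_sum_finite[of "{k}" f] assms by auto

lemma has_L2_fourier_scalar_plane_wave:
  assumes B: "invertible B" and k: "k \<in> recip B"
  shows "has_L2_fourier_scalar B (plane_wave k) (\<lambda>k'. if k' = k then 1 else 0)"
  unfolding has_L2_fourier_scalar_def
proof (intro conjI)
  show "set_integrable lborel (cell B) (\<lambda>x. (cmod (plane_wave k x))^2)"
    by (rule set_integrable_cell_bounded[OF B, of _ 1]) auto
  have "eventually (\<lambda>F. (LINT x:cell B|lborel. (cmod (plane_wave k x - (\<Sum>k'\<in>F. plane_wave k' x * (if k' = k then 1 else 0))))^2) = 0)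
      (finite_subsets_at_top (recip B))"
    using eventually_finite_subsets_at_top_contains[OF k] by eventually_elim (simp add: if_distrib cong: if_cong)
  then show "((\<lambda>F. LINT x:cell B|lborel. (cmod (plane_wave k x - (\<Sum>k'\<in>F. plane_wave k' x * (if k' = k then 1 else 0))))^2) \<longlongrightarrow> 0)
      (finite_subsets_at_top (recip B))"
    by (rule tendsto_eventually)
qed measurable

lemma has_L2_fourier_scalar_coeff:
  assumes B: "invertible B" and u: "has_L2_fourier_scalar B u \<alpha>" and k: "k \<in> recip B"
  shows "avg B (\<lambda>x. cnj (plane_wave k x) * u x) = \<alpha> k"
proof (rule has_sum_unique)
  show "((\<lambda>k'. cnj (if k' = k then 1 else 0) * \<alpha> k') has_sum avg B (\<lambda>x. cnj (plane_wave k x) * u x)) (recip B)"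
    by (rule has_L2_fourier_scalar_parseval[OF B has_L2_fourier_scalar_plane_wave[OF B k] u])
  show "((\<lambda>k'. cnj (if k' = k then 1 else 0) * \<alpha> k') has_sum \<alpha> k) (recip B)"
    using has_sum_single[OF k, of "\<lambda>k'. cnj (if k' = k then 1 else 0) * \<alpha> k'"] by simp
qed

lemma borel_measurable_vec_nth [measurable]:
  fixes f :: "'a \<Rightarrow> 'b::real_normed_vector^'n::finite"
  assumes "f \<in> borel_measurable M"
  shows "(\<lambda>x. f x $ i) \<in> borel_measurable M"
  using measurable_compose[OF assms, of "\<lambda>v. v $ i"]
  by (simp add: borel_measurable_continuous_onI linear_continuous_on bounded_linear_vec_nth)

lemma borel_measurable_vec_smult [measurable]:
  fixes f :: "'a \<Rightarrow> 'b::real_normed_field" and v :: "'b^'m::finite"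
  assumes "f \<in> borel_measurable M"
  shows "(\<lambda>x. f x *s v) \<in> borel_measurable M"
proof -
  have "(\<lambda>c::'b. c *s v) = (\<lambda>c. \<chi> i. c * v $ i)" by (auto simp: vec_eq_iff)
  then have "(\<lambda>c::'b. c *s v) \<in> borel_measurable borel"
    by (simp add: borel_measurable_continuous_onI continuous_intros)
  then show ?thesis using measurable_compose[OF assms] by blast
qed

lemma borel_measurable_vec_componentwise:
  fixes f :: "'a \<Rightarrow> complex^'n::finite"
  assumes "\<And>i. (\<lambda>x. f x $ i) \<in> borel_measurable M"
  shows "f \<in> borel_measurable M"
proof -
  have "f = (\<lambda>x. \<Sum>i\<in>UNIV. (f x $ i) *s axis i 1)"
    by (auto simp: fun_eq_iff vec_eq_iff sum_component axis_def if_distrib cong: if_cong)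
  also have "\<dots> \<in> borel_measurable M"
    using assms by measurable
  finally show ?thesis .
qed

lemma norm_vec_smult: "norm ((c::'b::real_normed_field) *s (v::'b^'m::finite)) = norm c * norm v"
  unfolding norm_vec_def by (simp add: norm_mult L2_set_right_distrib)

lemma matrix_vector_mult_smult: "(A::'a::comm_ring_1^'n::finite^'k::finite) *v (z *s v) = z *s (A *v v)"
  by (simp add: matrix_vector_mult_def vec_eq_iff sum_distrib_left mult_ac)

lemma matrix_vector_mult_sum: "(A::'a::comm_ring_1^'n::finite^'k::finite) *v (\<Sum>i\<in>I. v i) = (\<Sum>i\<in>I. A *v v i)"
  by (simp add: matrix_vector_mult_def vec_eq_iff sum_component sum_distrib_left) (intro allI sum.swap)

lemma norm_matrix_vector_mult_le:
  "norm ((S::complex^'m::finite^'n::finite) *v v) \<le> (\<Sum>r\<in>UNIV. \<Sum>j\<in>UNIV. cmod (S $ r $ j)) * norm v"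
proof -
  have "norm (S *v v) \<le> (\<Sum>r\<in>UNIV. cmod ((S *v v) $ r))"
    unfolding norm_vec_def by (rule L2_set_le_sum) simp
  also have "\<dots> \<le> (\<Sum>r\<in>UNIV. \<Sum>j\<in>UNIV. cmod (S $ r $ j) * norm v)"
  proof (rule sum_mono)
    fix r
    have "cmod ((S *v v) $ r) \<le> (\<Sum>j\<in>UNIV. cmod (S $ r $ j * v $ j))"
      unfolding matrix_vector_mult_def by (simp add: norm_sum)
    also have "\<dots> \<le> (\<Sum>j\<in>UNIV. cmod (S $ r $ j) * norm v)"
      by (intro sum_mono) (simp add: norm_mult mult_left_mono Finite_Cartesian_Product.norm_nth_le)
    finally show "cmod ((S *v v) $ r) \<le> (\<Sum>j\<in>UNIV. cmod (S $ r $ j) * norm v)" .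
  qed
  also have "\<dots> = (\<Sum>r\<in>UNIV. \<Sum>j\<in>UNIV. cmod (S $ r $ j)) * norm v"
    by (simp add: sum_distrib_right)
  finally show ?thesis .
qed

lemma borel_measurable_matrix_vector_mult_complex [measurable]:
  fixes f :: "'a \<Rightarrow> complex^'m::finite"
  assumes "f \<in> borel_measurable M"
  shows "(\<lambda>x. (S::complex^'m^'n::finite) *v f x) \<in> borel_measurable M"
  using assms by (intro borel_measurable_vec_componentwise) (simp add: matrix_vector_mult_def)

lemma set_integrable_cell_square:
  fixes g :: "real^'d::finite \<Rightarrow> 'b::{banach,second_countable_topology}"
  assumes B: "invertible B" and g: "g \<in> borel_measurable borel"
    and g2: "set_integrable lborel (cell B) (\<lambda>x. (norm (g x))^2)"
  shows "set_integrable lborel (cell B) g"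
proof (rule set_integrable_cell_dominated[OF B g])
  show "set_integrable lborel (cell B) (\<lambda>x. 1 + (norm (g x))^2)"
    using g2 set_integrable_cell_const[OF B] by (intro set_integral_add) auto
  show "norm (g x) \<le> 1 + (norm (g x))^2" for x
    using sum_squares_ge_zero[of "norm (g x) - 1/2" 0] by (simp add: power2_eq_square algebra_simps)
qed

lemma avg_component:
  assumes "set_integrable lborel (cell B) f"
  shows "avg B f $ i = avg B (\<lambda>x. f x $ i)"
  using integral_bounded_linear[OF bounded_linear_vec_nth[of i] assms[unfolded set_integrable_def]]
  by (simp add: avg_def set_lebesgue_integral_def)

lemma has_L2_fourier_residual_squared_integrable:
  assumes B: "invertible B" and D: "has_L2_fourier B D a"
  shows "set_integrable lborel (cell B) (\<lambda>x. (norm (D x - (\<Sum>k\<in>F. exp (\<i> * complex_of_real (k \<bullet> x)) *s a k)))^2)"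
proof (rule set_integrable_cell_dominated[OF B])
  let ?A = "\<Sum>k\<in>F. norm (a k)"
  have [measurable]: "D \<in> borel_measurable borel" and D2: "set_integrable lborel (cell B) (\<lambda>x. (norm (D x))^2)"
    using D unfolding has_L2_fourier_def by auto
  show "(\<lambda>x. (norm (D x - (\<Sum>k\<in>F. exp (\<i> * complex_of_real (k \<bullet> x)) *s a k)))^2) \<in> borel_measurable borel"
    by measurable
  show "set_integrable lborel (cell B) (\<lambda>x. 2 * (norm (D x))^2 + 2 * ?A^2)"
    using D2 set_integrable_cell_const[OF B] by (intro set_integral_add) auto
  fix x
  have "norm (\<Sum>k\<in>F. exp (\<i> * complex_of_real (k \<bullet> x)) *s a k) \<le> ?A"
    by (rule order_trans[OF norm_sum]) (simp add: norm_vec_smult)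
  then have "norm (D x - (\<Sum>k\<in>F. exp (\<i> * complex_of_real (k \<bullet> x)) *s a k)) \<le> norm (D x) + ?A"
    using norm_triangle_ineq4[of "D x"] by (meson add_left_mono order_trans)
  then have "(norm (D x - (\<Sum>k\<in>F. exp (\<i> * complex_of_real (k \<bullet> x)) *s a k)))^2 \<le> (norm (D x) + ?A)^2"
    by (intro power_mono) auto
  also have "\<dots> \<le> 2 * (norm (D x))^2 + 2 * ?A^2"
    using sum_squares_ge_zero[of "norm (D x) - ?A" 0] by (simp add: power2_eq_square algebra_simps)
  finally show "norm ((norm (D x - (\<Sum>k\<in>F. exp (\<i> * complex_of_real (k \<bullet> x)) *s a k)))^2) \<le> 2 * (norm (D x))^2 + 2 * ?A^2"
    by simp
qed

lemma has_L2_fourier_component: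
  assumes B: "invertible B" and D: "has_L2_fourier B D a"
  shows "has_L2_fourier_scalar B (\<lambda>x. D x $ r) (\<lambda>k. a k $ r)"
proof -
  have [measurable]: "D \<in> borel_measurable borel" and D2: "set_integrable lborel (cell B) (\<lambda>x. (norm (D x))^2)"
    and lim: "((\<lambda>F. LINT x:cell B|lborel. (norm (D x - (\<Sum>k\<in>F. exp (\<i> * complex_of_real (k \<bullet> x)) *s a k)))^2) \<longlongrightarrow> 0)
          (finite_subsets_at_top (recip B))"
    using D unfolding has_L2_fourier_def by auto
  have comp: "(D x - (\<Sum>k\<in>F. exp (\<i> * complex_of_real (k \<bullet> x)) *s a k)) $ r = D x $ r - (\<Sum>k\<in>F. plane_wave k x * a k $ r)" for x F
    by (simp add: plane_wave_def sum_component)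
  have r2: "set_integrable lborel (cell B) (\<lambda>x. (cmod (D x $ r))^2)"
    by (rule set_integrable_cell_dominated[OF B _ D2]) (auto intro: power_mono Finite_Cartesian_Product.norm_nth_le)
  have "((\<lambda>F. LINT x:cell B|lborel. (cmod (D x $ r - (\<Sum>k\<in>F. plane_wave k x * a k $ r)))^2) \<longlongrightarrow> 0) (finite_subsets_at_top (recip B))"
  proof (rule tendsto_sandwich[OF _ _ tendsto_const lim])
    show "eventually (\<lambda>F. 0 \<le> (LINT x:cell B|lborel. (cmod (D x $ r - (\<Sum>k\<in>F. plane_wave k x * a k $ r)))^2)) (finite_subsets_at_top (recip B))"
      by (intro always_eventually allI set_integral_nonneg) simp
    show "eventually (\<lambda>F. (LINT x:cell B|lborel. (cmod (D x $ r - (\<Sum>k\<in>F. plane_wave k x * a k $ r)))^2) \<le>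
        (LINT x:cell B|lborel. (norm (D x - (\<Sum>k\<in>F. exp (\<i> * complex_of_real (k \<bullet> x)) *s a k)))^2)) (finite_subsets_at_top (recip B))"
    proof (intro always_eventually allI set_integral_mono)
      fix F
      show "set_integrable lborel (cell B) (\<lambda>x. (cmod (D x $ r - (\<Sum>k\<in>F. plane_wave k x * a k $ r)))^2)"
        by (rule set_integrable_cell_residual_squared[OF B _ r2]) measurable
      show "set_integrable lborel (cell B) (\<lambda>x. (norm (D x - (\<Sum>k\<in>F. exp (\<i> * complex_of_real (k \<bullet> x)) *s a k)))^2)"
        by (rule has_L2_fourier_residual_squared_integrable[OF B D])
      show "(cmod (D x $ r - (\<Sum>k\<in>F. plane_wave k x * a k $ r)))^2 \<le> (norm (D x - (\<Sum>k\<in>F. exp (\<i> * complex_of_real (k \<bullet> x)) *s a k)))^2" for x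
        unfolding comp[symmetric] by (intro power_mono Finite_Cartesian_Product.norm_nth_le) simp
    qed
  qed
  then show ?thesis
    using r2 unfolding has_L2_fourier_scalar_def by simp
qed

lemma has_L2_fourier_coeff:
  assumes B: "invertible B" and E: "has_L2_fourier B E a" and k: "k \<in> recip B"
  shows "fourier_coeff B E k = a k"
proof -
  have [measurable]: "E \<in> borel_measurable borel" and E2: "set_integrable lborel (cell B) (\<lambda>x. (norm (E x))^2)"
    using E unfolding has_L2_fourier_def by auto
  have "(\<lambda>x. cnj (plane_wave k x) *s E x) \<in> borel_measurable borel"
    by (intro borel_measurable_vec_componentwise) simp
  then have int: "set_integrable lborel (cell B) (\<lambda>x. cnj (plane_wave k x) *s E x)"
    by (rule set_integrable_cell_square[OF B]) (use E2 in \<open>simp add: norm_vec_smult\<close>)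
  have "fourier_coeff B E k = avg B (\<lambda>x. cnj (plane_wave k x) *s E x)"
    by (simp add: fourier_coeff_def plane_wave_def exp_cnj)
  also have "\<dots> = a k"
    using has_L2_fourier_scalar_coeff[OF B has_L2_fourier_component[OF B E] k]
    by (simp add: vec_eq_iff avg_component[OF int])
  finally show ?thesis .
qed

lemma has_L2_fourier_add_const:
  assumes B: "invertible B" and D: "has_L2_fourier B (\<lambda>x. E x - c) a"
  shows "has_L2_fourier B E (a(0 := a 0 + c))"
proof -
  have Dm [measurable]: "(\<lambda>x. E x - c) \<in> borel_measurable borel"
    and D2: "set_integrable lborel (cell B) (\<lambda>x. (norm (E x - c))^2)"
    and lim: "((\<lambda>F. LINT x:cell B|lborel. (norm (E x - c - (\<Sum>k\<in>F. exp (\<i> * complex_of_real (k \<bullet> x)) *s a k)))^2) \<longlongrightarrow> 0)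
          (finite_subsets_at_top (recip B))"
    using D unfolding has_L2_fourier_def by auto
  have Em [measurable]: "E \<in> borel_measurable borel"
    using borel_measurable_add[OF Dm, of "\<lambda>_. c"] by simp
  have E2: "set_integrable lborel (cell B) (\<lambda>x. (norm (E x))^2)"
  proof (rule set_integrable_cell_dominated[OF B])
    show "set_integrable lborel (cell B) (\<lambda>x. 2 * (norm (E x - c))^2 + 2 * (norm c)^2)"
      using D2 set_integrable_cell_const[OF B] by (intro set_integral_add) auto
    fix x
    have "(norm (E x))^2 \<le> (norm (E x - c) + norm c)^2"
      using norm_triangle_ineq[of "E x - c" c] by (intro power_mono) auto
    also have "\<dots> \<le> 2 * (norm (E x - c))^2 + 2 * (norm c)^2"
      using sum_squares_ge_zero[of "norm (E x - c) - norm c" 0] by (simp add: power2_eq_square algebra_simps)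
    finally show "norm ((norm (E x))^2) \<le> 2 * (norm (E x - c))^2 + 2 * (norm c)^2" by simp
  qed measurable
  have "eventually (\<lambda>F. (LINT x:cell B|lborel. (norm (E x - (\<Sum>k\<in>F. exp (\<i> * complex_of_real (k \<bullet> x)) *s (a(0 := a 0 + c)) k)))^2)
      = (LINT x:cell B|lborel. (norm (E x - c - (\<Sum>k\<in>F. exp (\<i> * complex_of_real (k \<bullet> x)) *s a k)))^2)) (finite_subsets_at_top (recip B))"
    using eventually_finite_subsets_at_top_contains[OF zero_in_recip]
  proof eventually_elim
    case (elim F)
    have "(\<Sum>k\<in>F. exp (\<i> * complex_of_real (k \<bullet> x)) *s (a(0 := a 0 + c)) k)
        = (\<Sum>k\<in>F. exp (\<i> * complex_of_real (k \<bullet> x)) *s a k + (if k = 0 then c else 0))" for x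
      by (intro sum.cong) (auto simp: vector_add_ldistrib)
    then show ?case using elim by (simp add: sum.distrib algebra_simps)
  qed
  then show ?thesis
    using Em E2 lim unfolding has_L2_fourier_def by (simp add: tendsto_cong)
qed

lemma has_L2_fourier_matrix_mult:
  fixes S :: "complex^'m::finite^'n::finite"
  assumes B: "invertible B" and E: "has_L2_fourier B E a"
  shows "has_L2_fourier B (\<lambda>x. S *v E x) (\<lambda>k. S *v a k)"
proof -
  let ?K = "\<Sum>r\<in>UNIV. \<Sum>j\<in>UNIV. cmod (S $ r $ j)"
  let ?R = "\<lambda>F x. E x - (\<Sum>k\<in>F. exp (\<i> * complex_of_real (k \<bullet> x)) *s a k)"
  have [measurable]: "E \<in> borel_measurable borel" and E2: "set_integrable lborel (cell B) (\<lambda>x. (norm (E x))^2)"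
    and lim: "((\<lambda>F. LINT x:cell B|lborel. (norm (?R F x))^2) \<longlongrightarrow> 0) (finite_subsets_at_top (recip B))"
    using E unfolding has_L2_fourier_def by auto
  have sq_le: "(norm (S *v v))^2 \<le> ?K^2 * (norm v)^2" for v
    using norm_matrix_vector_mult_le[of S v] by (simp add: power_mult_distrib[symmetric] power_mono)
  have KE2: "set_integrable lborel (cell B) (\<lambda>x. ?K^2 * (norm (E x))^2)"
    using E2 by simp
  have SE2: "set_integrable lborel (cell B) (\<lambda>x. (norm (S *v E x))^2)"
    by (rule set_integrable_cell_dominated[OF B _ KE2]) (simp_all add: sq_le)
  have res: "S *v E x - (\<Sum>k\<in>F. exp (\<i> * complex_of_real (k \<bullet> x)) *s (S *v a k)) = S *v ?R F x" for F x
    by (simp add: matrix_vector_mult_diff_distrib matrix_vector_mult_sum matrix_vector_mult_smult)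
  have "((\<lambda>F. LINT x:cell B|lborel. (norm (S *v ?R F x))^2) \<longlongrightarrow> 0) (finite_subsets_at_top (recip B))"
  proof (rule tendsto_sandwich[OF _ _ tendsto_const])
    show "eventually (\<lambda>F. 0 \<le> (LINT x:cell B|lborel. (norm (S *v ?R F x))^2)) (finite_subsets_at_top (recip B))"
      by (intro always_eventually allI set_integral_nonneg) simp
    show "((\<lambda>F. ?K^2 * (LINT x:cell B|lborel. (norm (?R F x))^2)) \<longlongrightarrow> 0) (finite_subsets_at_top (recip B))"
      using tendsto_mult_left[OF lim, of "?K^2"] by simp
    show "eventually (\<lambda>F. (LINT x:cell B|lborel. (norm (S *v ?R F x))^2)
        \<le> ?K^2 * (LINT x:cell B|lborel. (norm (?R F x))^2)) (finite_subsets_at_top (recip B))"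
    proof (intro always_eventually allI)
      fix F
      have R2: "set_integrable lborel (cell B) (\<lambda>x. (norm (?R F x))^2)"
        by (rule has_L2_fourier_residual_squared_integrable[OF B E])
      have KR2: "set_integrable lborel (cell B) (\<lambda>x. ?K^2 * (norm (?R F x))^2)"
        using R2 by simp
      have "(LINT x:cell B|lborel. (norm (S *v ?R F x))^2) \<le> (LINT x:cell B|lborel. ?K^2 * (norm (?R F x))^2)"
        by (intro set_integral_mono KR2 set_integrable_cell_dominated[OF B _ KR2]) (simp_all add: sq_le)
      then show "(LINT x:cell B|lborel. (norm (S *v ?R F x))^2) \<le> ?K^2 * (LINT x:cell B|lborel. (norm (?R F x))^2)"
        by simp
    qed
  qed
  then show ?thesis
    using SE2 unfolding has_L2_fourier_def res by simp
qed

lemma has_sum_sum: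
  fixes f :: "'i \<Rightarrow> 'a \<Rightarrow> 'b::topological_comm_monoid_add"
  assumes "finite I" and "\<And>i. i \<in> I \<Longrightarrow> (f i has_sum s i) A"
  shows "((\<lambda>x. \<Sum>i\<in>I. f i x) has_sum (\<Sum>i\<in>I. s i)) A"
  using assms
proof (induction I rule: finite_induct)
  case (insert i I)
  have "((\<lambda>x. f i x + (\<Sum>j\<in>I. f j x)) has_sum s i + (\<Sum>j\<in>I. s j)) A"
    by (rule has_sum_add) (use insert in auto)
  then show ?case using insert by simp
qed simp

lemma avg_sum:
  "(\<And>i. i \<in> I \<Longrightarrow> set_integrable lborel (cell B) (f i)) \<Longrightarrow> avg B (\<lambda>x. \<Sum>i\<in>I. f i x) = (\<Sum>i\<in>I. avg B (f i))"
  by (simp add: avg_def set_integral_sum scaleR_sum_right)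

lemma avg_Re:
  assumes "set_integrable lborel (cell B) f"
  shows "avg B (\<lambda>x. Re (f x)) = Re (avg B f)"
  using integral_bounded_linear[OF bounded_linear_Re assms[unfolded set_integrable_def]]
  by (simp add: avg_def set_lebesgue_integral_def)

text \<open>No Hermitian assumption is needed here, since \<open>quadform\<close> takes the real part.\<close>

lemma has_L2_fourier_parseval_quadform:
  assumes B: "invertible B" and E: "has_L2_fourier B E a"
  shows "((\<lambda>k. quadform S (a k)) has_sum avg B (\<lambda>x. quadform S (E x))) (recip B)"
proof -
  have SE: "has_L2_fourier B (\<lambda>x. S *v E x) (\<lambda>k. S *v a k)"
    by (rule has_L2_fourier_matrix_mult[OF B E])
  note Ec = has_L2_fourier_component[OF B E] and SEc = has_L2_fourier_component[OF B SE]
  have int: "set_integrable lborel (cell B) (\<lambda>x. cnj (E x $ r) * (S *v E x) $ r)" for r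
    using Ec[of r] SEc[of r] unfolding has_L2_fourier_scalar_def
    by (intro set_integrable_cell_cnj_mult[OF B]) auto
  have "((\<lambda>k. \<Sum>r\<in>UNIV. cnj (a k $ r) * (S *v a k) $ r) has_sum (\<Sum>r\<in>UNIV. avg B (\<lambda>x. cnj (E x $ r) * (S *v E x) $ r))) (recip B)"
    by (intro has_sum_sum has_L2_fourier_scalar_parseval[OF B Ec SEc]) simp
  then have sum: "((\<lambda>k. cdot (a k) (S *v a k)) has_sum avg B (\<lambda>x. cdot (E x) (S *v E x))) (recip B)"
    by (simp add: cdot_def avg_sum int)
  have cint: "set_integrable lborel (cell B) (\<lambda>x. cdot (E x) (S *v E x))"
    unfolding cdot_def by (intro set_integral_sum(1) int)
  show ?thesis
    unfolding quadform_def avg_Re[OF cint] by (rule has_sum_Re[OF sum])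
qed

lemma avg_eq_fourier_coeff_zero: "avg B E = fourier_coeff B E 0"
  by (simp add: fourier_coeff_def)

lemma has_L2_fourier_plane_wave:
  assumes B: "invertible B" and k: "k \<in> recip B"
  shows "has_L2_fourier B (\<lambda>x. plane_wave k x *s H) (\<lambda>k'. if k' = k then H else 0)"
  unfolding has_L2_fourier_def
proof (intro conjI)
  show "set_integrable lborel (cell B) (\<lambda>x. (norm (plane_wave k x *s H))^2)"
    by (rule set_integrable_cell_bounded[OF B, of _ "(norm H)^2"]) (auto simp: norm_vec_smult)
  have "eventually (\<lambda>F. (LINT x:cell B|lborel. (norm (plane_wave k x *s H
      - (\<Sum>k'\<in>F. exp (\<i> * complex_of_real (k' \<bullet> x)) *s (if k' = k then H else 0))))^2) = 0) (finite_subsets_at_top (recip B))"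
    using eventually_finite_subsets_at_top_contains[OF k]
    by eventually_elim (simp add: if_distrib plane_wave_def cong: if_cong)
  then show "((\<lambda>F. LINT x:cell B|lborel. (norm (plane_wave k x *s H
      - (\<Sum>k'\<in>F. exp (\<i> * complex_of_real (k' \<bullet> x)) *s (if k' = k then H else 0))))^2) \<longlongrightarrow> 0) (finite_subsets_at_top (recip B))"
    by (rule tendsto_eventually)
qed measurable

lemma avg_quadform_eq_if_quadform_coeffs_zero:
  assumes B: "invertible B" and E: "has_L2_fourier B E a"
    and zero: "\<And>k. k \<in> recip B - {0} \<Longrightarrow> quadform S (a k) = 0"
  shows "avg B (\<lambda>x. quadform S (E x)) = quadform S (avg B E)"
proof -
  have "avg B E = a 0"
    by (simp add: avg_eq_fourier_coeff_zero has_L2_fourier_coeff[OF B E zero_in_recip])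
  moreover have "((\<lambda>k. quadform S (a k)) has_sum quadform S (a 0)) (recip B)"
    using zero by (intro has_sum_single zero_in_recip) auto
  ultimately show ?thesis
    using has_sum_unique[OF has_L2_fourier_parseval_quadform[OF B E]] by simp
qed

section \<open>Hermitian forms\<close>

definition sesq :: "complex^'m::finite^'m \<Rightarrow> complex^'m \<Rightarrow> complex^'m \<Rightarrow> complex" where
  "sesq S u v = cdot u (S *v v)"

lemma sesq_add_left: "sesq S (u + v) w = sesq S u w + sesq S v w"
  by (simp add: sesq_def cdot_def sum.distrib distrib_right)

lemma sesq_add_right: "sesq S u (v + w) = sesq S u v + sesq S u w"
  by (simp add: sesq_def cdot_def matrix_vector_right_distrib sum.distrib distrib_left)

lemma sesq_smult_left: "sesq S (z *s u) w = cnj z * sesq S u w"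
  by (simp add: sesq_def cdot_def sum_distrib_left mult_ac)

lemma sesq_smult_right: "sesq S u (z *s w) = z * sesq S u w"
  by (simp add: sesq_def cdot_def matrix_vector_mult_smult sum_distrib_left mult_ac)

lemma sesq_expand: "sesq S u v = (\<Sum>r\<in>UNIV. \<Sum>j\<in>UNIV. S $ r $ j * (cnj (u $ r) * v $ j))"
  by (simp add: sesq_def cdot_def matrix_vector_mult_def sum_distrib_left mult_ac)

lemma sesq_hermitian:
  assumes "hermitian S"
  shows "sesq S u v = cnj (sesq S v u)"
proof -
  have h: "cnj (S $ i $ j) = S $ j $ i" for i j
    using assms unfolding hermitian_def by (metis complex_cnj_cnj)
  have "cnj (sesq S v u) = (\<Sum>r\<in>UNIV. \<Sum>j\<in>UNIV. S $ j $ r * (v $ r * cnj (u $ j)))"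
    by (simp add: sesq_expand cnj_sum h)
  also have "\<dots> = sesq S u v"
    by (subst sum.swap) (simp add: sesq_expand mult_ac)
  finally show ?thesis by simp
qed

lemma quadform_hermitian:
  assumes "hermitian S"
  shows "complex_of_real (quadform S v) = sesq S v v"
proof -
  have "cnj (sesq S v v) = sesq S v v"
    using sesq_hermitian[OF assms, of v v] by simp
  then have "Im (cnj (sesq S v v)) = Im (sesq S v v)" by simp
  then have "Im (sesq S v v) = 0" by simp
  then show ?thesis by (simp add: quadform_def sesq_def complex_eq_iff)
qed

lemma quadform_smult: "quadform S (z *s H) = (cmod z)^2 * quadform S H"
proof -
  have zz: "cnj z * z = complex_of_real ((cmod z)^2)"
    by (metis complex_norm_square mult.commute)
  have "cdot (z *s H) (S *v (z *s H)) = (cnj z * z) * cdot H (S *v H)"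
    using sesq_smult_left[of S z H "z *s H"] sesq_smult_right[of S H z H]
    by (simp add: sesq_def mult_ac)
  then have "cdot (z *s H) (S *v (z *s H)) = complex_of_real ((cmod z)^2) * cdot H (S *v H)"
    by (simp only: zz)
  then show ?thesis unfolding quadform_def by simp
qed

lemma quadform_zero [simp]: "quadform S 0 = 0"
  by (simp add: quadform_def cdot_def)

lemma quadform_add_smult:
  assumes "hermitian S"
  shows "complex_of_real (quadform S (H + z *s W)) =
     complex_of_real (quadform S H) + z * cnj (sesq S W H) + cnj z * sesq S W H + cnj z * z * complex_of_real (quadform S W)"
  by (simp add: quadform_hermitian[OF assms] sesq_add_left sesq_add_right sesq_smult_left sesq_smult_right
      sesq_hermitian[OF assms, of H W] algebra_simps)

text \<open>First-order condition at a zero of a form that is nonnegative on a subspace: perturbing along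
  \<open>W\<close> by \<open>z = -s \<cdot> sesq S W H\<close> with small \<open>s > 0\<close> would make the form negative.\<close>

lemma sesq_eq_0_if_nonneg_on_range:
  fixes M :: "complex^'l::finite^'m::finite" and S :: "complex^'m^'m"
  assumes herm: "hermitian S" and nonneg: "\<And>G'. quadform S (M *v G') \<ge> 0"
    and zero: "quadform S (M *v G) = 0"
  shows "sesq S (M *v G') (M *v G) = 0"
proof -
  let ?H = "M *v G" and ?W = "M *v G'"
  let ?g = "sesq S ?W ?H" and ?q = "quadform S ?W"
  have q0: "?q \<ge> 0" by (rule nonneg)
  define s where "s = 1 / (?q + 1)"
  have s0: "s > 0" and sq: "s * ?q < 1" using q0 by (simp_all add: s_def)
  define z where "z = - complex_of_real s * ?g"
  have "M *v (G + z *s G') = ?H + z *s ?W"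
    by (simp add: matrix_vector_right_distrib matrix_vector_mult_smult)
  then have "quadform S (?H + z *s ?W) \<ge> 0" using nonneg by metis
  moreover have "complex_of_real (quadform S (?H + z *s ?W)) = complex_of_real (s * (s * ?q - 2) * (cmod ?g)^2)"
    unfolding quadform_add_smult[OF herm] zero z_def
    by (simp add: complex_norm_square[symmetric] algebra_simps power2_eq_square)
  ultimately have "0 \<le> s * (s * ?q - 2) * (cmod ?g)^2"
    by (simp only: of_real_eq_iff)
  moreover have "s * (s * ?q - 2) < 0"
    using s0 sq by (intro mult_pos_neg) auto
  ultimately have "\<not> (cmod ?g)^2 > 0"
    using mult_neg_pos[of "s * (s * ?q - 2)" "(cmod ?g)^2"] by linarith
  then show ?thesis by simp
qed

lemma conj_transpose_mult_eq_0_if_nonneg_on_range: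
  fixes M :: "complex^'l::finite^'m::finite" and S :: "complex^'m^'m"
  assumes herm: "hermitian S" and nonneg: "\<And>G'. quadform S (M *v G') \<ge> 0"
    and zero: "quadform S (M *v G) = 0"
  shows "conj_transpose M *v (S *v (M *v G)) = 0"
proof -
  have "(conj_transpose M *v v) $ q = cdot (M *v axis q 1) v" for v q
  proof -
    have "(M *v axis q 1) $ r = M $ r $ q" for r
      by (simp add: matrix_vector_mult_def axis_def if_distrib cong: if_cong)
    then show ?thesis by (simp add: conj_transpose_def matrix_vector_mult_def cdot_def)
  qed
  then show ?thesis
    using sesq_eq_0_if_nonneg_on_range[OF herm nonneg zero] by (simp add: vec_eq_iff sesq_def)
qed

section \<open>The plane-wave test\<close>

definition diag_mat :: "real^'d::finite \<Rightarrow> real^'d^'d" where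
  "diag_mat b = (\<chi> i j. if i = j then b $ i else 0)"

lemma diag_mat_mult_vec: "diag_mat b *v v = (\<chi> i. b $ i * v $ i)"
proof -
  have "(\<Sum>j\<in>UNIV. (if i = j then b $ i else 0) * v $ j) = (\<Sum>j\<in>UNIV. if j = i then b $ i * v $ i else 0)" for i
    by (intro sum.cong) auto
  then show ?thesis by (simp add: diag_mat_def matrix_vector_mult_def vec_eq_iff)
qed

lemma diag_mat_mult: "diag_mat b ** diag_mat c = diag_mat (\<chi> i. b $ i * c $ i)"
proof -
  have "(\<Sum>l\<in>UNIV. (if i = l then b $ i else 0) * (if l = j then c $ l else 0))
      = (\<Sum>l\<in>UNIV. if l = i then b $ i * (if i = j then c $ i else 0) else 0)" for i j
    by (intro sum.cong) auto
  then show ?thesis by (simp add: diag_mat_def matrix_matrix_mult_def vec_eq_iff)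
qed

lemma invertible_diag_mat:
  assumes "\<And>i. b $ i \<noteq> 0"
  shows "invertible (diag_mat b)"
proof -
  have "diag_mat (\<chi> i. 1) = mat 1" by (simp add: diag_mat_def mat_def vec_eq_iff)
  then show ?thesis
    using assms unfolding invertible_def
    by (intro exI[of _ "diag_mat (\<chi> i. 1 / b $ i)"]) (simp add: diag_mat_mult)
qed

definition dual_lattice_basis :: "real^'d::finite \<Rightarrow> real^'d^'d" where
  "dual_lattice_basis k = diag_mat (\<chi> i. if k $ i = 0 then 1 else 2 * pi / \<bar>k $ i\<bar>)"

lemma invertible_dual_lattice_basis: "invertible (dual_lattice_basis k)"
  unfolding dual_lattice_basis_def by (rule invertible_diag_mat) simp

lemma in_recip_dual_lattice_basis: "k \<in> recip (dual_lattice_basis (k::real^'d::finite))"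
  unfolding recip_def
proof (intro CollectI ballI allI)
  fix lam x assume "lam \<in> lattice (dual_lattice_basis k)"
  then obtain n :: "int^'d" where lam: "lam = dual_lattice_basis k *v (\<chi> i. real_of_int (n $ i))"
    unfolding lattice_def by auto
  define m where "m = (\<Sum>i\<in>UNIV. (if k $ i = 0 then 0 else sgn (k $ i)) * real_of_int (n $ i))"
  have "m \<in> \<int>" unfolding m_def by (intro Ints_sum) (auto simp: sgn_real_def)
  then obtain j :: int where m: "m = of_int j" using Ints_cases by blast
  have "k \<bullet> lam = (\<Sum>i\<in>UNIV. k $ i * ((if k $ i = 0 then 1 else 2 * pi / \<bar>k $ i\<bar>) * real_of_int (n $ i)))"
    by (simp add: lam dual_lattice_basis_def diag_mat_mult_vec inner_vec_def)
  also have "\<dots> = 2 * pi * m"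
    unfolding m_def sum_distrib_left by (intro sum.cong refl) (auto simp: sgn_real_def field_simps)
  finally have "exp (\<i> * complex_of_real (k \<bullet> lam)) = 1"
    unfolding exp_eq_1 by (auto simp: m intro!: exI[of _ j])
  then show "exp (\<i> * complex_of_real (k \<bullet> (x + lam))) = exp (\<i> * complex_of_real (k \<bullet> x))"
    by (simp add: inner_add_right distrib_left exp_add)
qed

lemma dpart_zero: "dpart as (\<lambda>y. 0) = (\<lambda>y. 0)"
  by (induction as) (auto simp: partial_deriv_def fun_eq_iff)

lemma Lop_zero: "Lop A0 Ah t (\<lambda>x. 0) x = 0"
  by (simp add: Lop_def dpart_zero vec_eq_iff)

lemma poly_deg_le_zero: "poly_deg_le t (\<lambda>x. 0)"
  unfolding poly_deg_le_def by (intro exI[of _ "\<lambda>_. 0"]) simp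

lemma qstar_convex_imp_quadform_nonneg:
  assumes Q: "qstar_convex A0 Ah t (quadform S)" and k: "k \<noteq> 0"
  shows "quadform S (Lhat A0 Ah t k *v G) \<ge> 0"
proof -
  define B where "B = dual_lattice_basis k"
  define H where "H = Lhat A0 Ah t k *v G"
  define c where "c = (\<lambda>k'. if k' = k then G else 0)"
  define E where "E = (\<lambda>x. plane_wave k x *s H)"
  have B: "invertible B" and kB: "k \<in> recip B"
    unfolding B_def by (rule invertible_dual_lattice_basis in_recip_dual_lattice_basis)+
  have coeffs: "(\<lambda>k'. Lhat A0 Ah t k' *v c k') = (\<lambda>k'. if k' = k then H else 0)"
    by (auto simp: c_def H_def fun_eq_iff)
  have E_fourier: "has_L2_fourier B E (\<lambda>k'. Lhat A0 Ah t k' *v c k')"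
    unfolding coeffs E_def by (rule has_L2_fourier_plane_wave[OF B kB])
  have qE: "quadform S (E x) = quadform S H" for x
    by (simp add: E_def quadform_smult)
  have "avg B (\<lambda>x. quadform S (E x)) \<ge> quadform S (avg B E)"
  proof -
    have "(\<lambda>k. (norm (Lhat A0 Ah t k *v c k))^2) summable_on recip B \<longleftrightarrow>
          (\<lambda>k. (norm (Lhat A0 Ah t k *v c k))^2) summable_on {k}"
      by (rule summable_on_cong_neutral) (auto simp: c_def kB)
    then have "(\<lambda>k. (norm (Lhat A0 Ah t k *v c k))^2) summable_on recip B"
      by simp
    moreover have "set_integrable lborel (cell B) (\<lambda>x. quadform S (E x))"
      unfolding qE by (rule set_integrable_cell_const[OF B])
    moreover have "\<exists>C N. \<forall>k\<in>recip B. norm (c k) \<le> C * (1 + norm k) ^ N"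
      by (intro exI[of _ "norm G"] exI[of _ "0::nat"]) (simp add: c_def)
    ultimately show ?thesis
      using Q[unfolded qstar_convex_def, rule_format, of B "\<lambda>_. 0" 0 c E] B E_fourier
      by (simp add: poly_deg_le_zero Lop_zero)
  qed
  moreover have "avg B E = 0"
    using has_L2_fourier_coeff[OF B E_fourier zero_in_recip] k by (simp add: avg_eq_fourier_coeff_zero c_def)
  ultimately show ?thesis
    unfolding qE avg_const[OF B] H_def by simp
qed

lemma Lhat_mult_in_nullJ:
  assumes herm: "hermitian S" and Q: "qstar_convex A0 Ah t (quadform S)"
    and k: "k \<noteq> 0" and G: "G \<in> Uset S A0 Ah t k"
  shows "S *v (Lhat A0 Ah t k *v G) \<in> nullJ A0 Ah t k"
  using conj_transpose_mult_eq_0_if_nonneg_on_range[OF herm qstar_convex_imp_quadform_nonneg[OF Q k]] G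
  by (simp add: nullJ_def Uset_def Sset_def)

lemma field_with_Uset_coeffs:
  assumes herm: "hermitian S" and Q: "qstar_convex A0 Ah t (quadform S)" and B: "invertible B"
    and cU: "\<And>k. k \<in> recip B - {0} \<Longrightarrow> c k \<in> Uset S A0 Ah t k"
    and D: "has_L2_fourier B (\<lambda>x. E x - E0) (\<lambda>k. if k = 0 then 0 else Lhat A0 Ah t k *v c k)"
  shows "avg B (\<lambda>x. quadform S (E x)) = quadform S (avg B E)"
    and "k \<in> recip B - {0} \<Longrightarrow> fourier_coeff B (\<lambda>x. S *v E x) k \<in> nullJ A0 Ah t k"
proof -
  define a where "a = (\<lambda>k. if k = 0 then E0 else Lhat A0 Ah t k *v c k)"
  have "(\<lambda>k. if k = 0 then 0 else Lhat A0 Ah t k *v c k)(0 := 0 + E0) = a"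
    by (auto simp: a_def fun_eq_iff)
  with has_L2_fourier_add_const[OF B D] have E: "has_L2_fourier B E a"
    by simp
  show "avg B (\<lambda>x. quadform S (E x)) = quadform S (avg B E)"
    using cU by (intro avg_quadform_eq_if_quadform_coeffs_zero[OF B E]) (simp add: a_def Uset_def Sset_def)
  assume k: "k \<in> recip B - {0}"
  then have "fourier_coeff B (\<lambda>x. S *v E x) k = S *v (Lhat A0 Ah t k *v c k)"
    using has_L2_fourier_coeff[OF B has_L2_fourier_matrix_mult[OF B E, of S], of k] by (simp add: a_def)
  then show "fourier_coeff B (\<lambda>x. S *v E x) k \<in> nullJ A0 Ah t k"
    using Lhat_mult_in_nullJ[OF herm Q _ cU[OF k]] k by simp
qed

theorem mainTheorem6:
  fixes A0 :: "'m::finite \<Rightarrow> 'l::finite \<Rightarrow> complex"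
    and Ah :: "nat \<Rightarrow> 'd::finite list \<Rightarrow> 'm \<Rightarrow> 'l \<Rightarrow> complex"
    and t :: nat
    and S :: "complex^'m^'m"
  assumes "t \<ge> 1"
    and "hermitian S"
    and "qstar_convex A0 Ah t (quadform S)"
  shows "(\<forall>k::real^'d. k \<noteq> 0 \<longrightarrow>
            (\<forall>G\<in>Uset S A0 Ah t k. S *v (Lhat A0 Ah t k *v G) \<in> nullJ A0 Ah t k))
    \<and> (\<forall>(B::real^'d^'d) (c::real^'d \<Rightarrow> complex^'l) (U0::real^'d \<Rightarrow> complex^'l) E0 E.
          invertible B
          \<and> (\<forall>k\<in>recip B - {0}. c k \<in> Uset S A0 Ah t k)
          \<and> (\<lambda>k. (norm (Lhat A0 Ah t k *v c k))^2) summable_on (recip B - {0})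
          \<and> poly_deg_le t U0 \<and> (\<forall>x. Lop A0 Ah t U0 x = E0)
          \<and> has_L2_fourier B (\<lambda>x. E x - E0) (\<lambda>k. if k = 0 then 0 else Lhat A0 Ah t k *v c k)
          \<longrightarrow> avg B (\<lambda>x. quadform S (E x)) = quadform S (avg B E)
            \<and> (\<forall>k\<in>recip B - {0}. fourier_coeff B (\<lambda>x. S *v E x) k \<in> nullJ A0 Ah t k))"
proof -
  note herm = assms(2) and Q = assms(3)
  show ?thesis
    using Lhat_mult_in_nullJ[OF herm Q] field_with_Uset_coeffs[OF herm Q] by blast
qed

end
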